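(* Let $A$ be a commutative unital $\mathbb{K}$-algebra equipped with an involution $\dagger:A\to A$ (a linear map with $\dagger\circ\dagger=\mathrm{id}$ and $[a;b]^\dagger=[b^\dagger;a^\dagger]$). Let $q\in\{\theta,\mathrm r,\ell\}$ ($\theta\in\mathbb{K}$) and extend $\dagger$ to $T^+(A)$ by $(a_1\otimes\cdots\otimes a_n)^\dagger:=a_1^\dagger\otimes\cdots\otimes a_n^\dagger$. Then $(T^+(A),\bar\bullet^q,P_A,\dagger)$ is an involutive commutative $\mathbf R_q$-algebra, and together with $i_A:a\mapsto a\otimes1_{\mathbb{K}}$ it is the free involutive commutative $\mathbf R_q$-algebra over $(A,\dagger)$: for every unital commutative $\mathbf R_q$-algebra $(X,P)$ with involution $\dagger'$ commuting with $P$, and every unital algebra morphism $\phi:A\to X$ with $\phi(a^\dagger)=\phi(a)^{\dagger'}$, there is a unique $\mathbf R_q$-algebra morphism $\tilde\phi:T^+(A)\to X$ with $\tilde\phi\circ i_A=\phi$, and it satisfies $\tilde\phi(U^\dagger)=\tilde\phi(U)^{\dagger'}$ for all $U$.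
   Context: $\mathbb{K}$ is a field of characteristic $0$; $A$ has product $[a;b]$ and unit $1_A$. $T(A)=\bigoplus_{n\ge0}A^{\otimes n}$, $A^{\otimes0}=\mathbb{K}1_{\mathbb{K}}$, $a\otimes1_{\mathbb{K}}$ identified with $a$. For $q\in\{\theta,\mathrm r,\ell\}$ the product $\bullet^q$ on $T(A)$ is bilinear with $k1_{\mathbb{K}}\bullet^qU=kU=U\bullet^qk1_{\mathbb{K}}$ and for $a,b\in A$, $U,V\in T(A)$: $(a\otimes U)\bullet^q(b\otimes V)=a\otimes(U\bullet^q(b\otimes V))+b\otimes((a\otimes U)\bullet^qV)+M_q$, where $M_\theta=\theta[a;b]\otimes(U\bullet^\theta V)$ (quasi-shuffle of weight $\theta$), $M_{\mathrm r}=-1_A\otimes[a;b]\otimes(U\bullet^{\mathrm r}V)$ (right-shift shuffle), $M_\ell=-[a;b]\otimes1_A\otimes(U\bullet^\ell V)$ (left-shift shuffle). $T^+(A)=A\otimes T(A)$ with product $(a\otimes U)\bar\bullet^q(b\otimes V)=[a;b]\otimes(U\bullet^qV)$, unit $1_A\otimes1_{\mathbb{K}}$, and $P_A(a_1\otimes\cdots\otimes a_n)=1_A\otimes a_1\otimes\cdots\otimes a_n$. An $\mathbf R_\theta$-algebra is a Rota--Baxter algebra of scalar weight $\theta$: $(B,P)$ with $P(x)P(y)=P(P(x)y+xP(y))+\theta P(xy)$; an $\mathbf R_{\mathrm r}$-algebra is a Nijenhuis algebra: $P(x)P(y)=P(P(x)y+xP(y))-P^2(xy)$; an $\mathbf R_\ell$-algebra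 is a $TD$-algebra: $P(x)P(y)=P(P(x)y+xP(y))-P(xP(1_B)y)$. Morphisms of $\mathbf R_q$-algebras are unital algebra homomorphisms $f$ with $fP_1=P_2f$. An involutive commutative $\mathbf R_q$-algebra is a unital commutative $\mathbf R_q$-algebra $(B,P)$ with an involution $\dagger$ (linear, $\dagger^2=\mathrm{id}$, $(xy)^\dagger=y^\dagger x^\dagger$) satisfying $P(x^\dagger)=P(x)^\dagger$. *)

theory Defs
  imports "HOL-Library.Function_Algebras"
begin

datatype 'k rq = RTheta 'k | RNij | RTD

section \<open>Commutative unital K-algebras (the ring structure is the type class comm_ring_1,
  the K-action is an explicit scalar multiplication)\<close>

definition kalg :: "('k::field \<Rightarrow> 'x::comm_ring_1 \<Rightarrow> 'x) \<Rightarrow> bool" where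
  "kalg s \<longleftrightarrow> (\<forall>c x y. s c (x + y) = s c x + s c y) \<and> (\<forall>c d x. s (c + d) x = s c x + s d x)
     \<and> (\<forall>c d x. s c (s d x) = s (c * d) x) \<and> (\<forall>x. s 1 x = x)
     \<and> (\<forall>c x y. s c (x * y) = s c x * y)"

definition klinear :: "('k \<Rightarrow> 'x \<Rightarrow> 'x) \<Rightarrow> ('k \<Rightarrow> 'y \<Rightarrow> 'y) \<Rightarrow> ('x::plus \<Rightarrow> 'y::plus) \<Rightarrow> bool" where
  "klinear s1 s2 f \<longleftrightarrow> (\<forall>x y. f (x + y) = f x + f y) \<and> (\<forall>c x. f (s1 c x) = s2 c (f x))"

definition involution :: "('k \<Rightarrow> 'x \<Rightarrow> 'x) \<Rightarrow> ('x::comm_ring_1 \<Rightarrow> 'x) \<Rightarrow> bool" where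
  "involution s d \<longleftrightarrow> klinear s s d \<and> (\<forall>x. d (d x) = x) \<and> (\<forall>x y. d (x * y) = d y * d x)"

definition rq_op :: "('k \<Rightarrow> 'x \<Rightarrow> 'x) \<Rightarrow> 'k rq \<Rightarrow> ('x::comm_ring_1 \<Rightarrow> 'x) \<Rightarrow> bool" where
  "rq_op s q P \<longleftrightarrow> (\<forall>x y. P x * P y = P (P x * y + x * P y) +
      (case q of RTheta \<theta> \<Rightarrow> s \<theta> (P (x * y))
               | RNij \<Rightarrow> - P (P (x * y))
               | RTD \<Rightarrow> - P (x * P 1 * y)))"

definition comm_rq_algebra :: "('k::field \<Rightarrow> 'x \<Rightarrow> 'x) \<Rightarrow> ('x::comm_ring_1 \<Rightarrow> 'x) \<Rightarrow> 'k rq \<Rightarrow> bool" where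
  "comm_rq_algebra s P q \<longleftrightarrow> kalg s \<and> klinear s s P \<and> rq_op s q P"

definition inv_comm_rq_algebra ::
  "('k::field \<Rightarrow> 'x \<Rightarrow> 'x) \<Rightarrow> ('x::comm_ring_1 \<Rightarrow> 'x) \<Rightarrow> 'k rq \<Rightarrow> ('x \<Rightarrow> 'x) \<Rightarrow> bool" where
  "inv_comm_rq_algebra s P q d \<longleftrightarrow> comm_rq_algebra s P q \<and> involution s d \<and> (\<forall>x. P (d x) = d (P x))"

definition alg_hom :: "('k \<Rightarrow> 'a \<Rightarrow> 'a) \<Rightarrow> ('k \<Rightarrow> 'x \<Rightarrow> 'x) \<Rightarrow> ('a::comm_ring_1 \<Rightarrow> 'x::comm_ring_1) \<Rightarrow> bool" where
  "alg_hom sA sX f \<longleftrightarrow> klinear sA sX f \<and> f 1 = 1 \<and> (\<forall>x y. f (x * y) = f x * f y)"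

section \<open>The tensor algebra, modelled as formal K-linear combinations of words over A
  modulo the multilinearity relations\<close>

text \<open>A formal combination of words: a finitely supported function  'a list => 'k.
  The word [a1,...,an] stands for the pure tensor a1 (x) ... (x) an; [] stands for 1_K.\<close>

definition supp :: "('a list \<Rightarrow> 'k::zero) \<Rightarrow> 'a list set" where
  "supp F = {xs. F xs \<noteq> 0}"

definition FS :: "('a list \<Rightarrow> 'k::zero) set" where
  "FS = {F. finite (supp F)}"

text \<open>Representatives of T^+(A) = A (x) T(A): combinations of nonempty words.\<close>
definition TP :: "('a list \<Rightarrow> 'k::zero) set" where
  "TP = {F \<in> FS. F [] = 0}"

definition wsingle :: "'a list \<Rightarrow> ('a list \<Rightarrow> 'k::{zero,one})" where
  "wsingle xs = (\<lambda>ys. if ys = xs then 1 else 0)"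

definition fsc :: "'k::times \<Rightarrow> ('a list \<Rightarrow> 'k) \<Rightarrow> ('a list \<Rightarrow> 'k)" where
  "fsc c F = (\<lambda>xs. c * F xs)"

text \<open>pre a F = a (x) F  (linear in F).\<close>
definition pre :: "'a \<Rightarrow> ('a list \<Rightarrow> 'k::zero) \<Rightarrow> ('a list \<Rightarrow> 'k)" where
  "pre a F = (\<lambda>xs. case xs of [] \<Rightarrow> 0 | y # ys \<Rightarrow> if y = a then F ys else 0)"

fun sh :: "'k rq \<Rightarrow> 'a::comm_ring_1 list \<Rightarrow> 'a list \<Rightarrow> ('a list \<Rightarrow> 'k::field)" where
  "sh q [] V = wsingle V"
| "sh q (a # U) [] = wsingle (a # U)"
| "sh q (a # U) (b # V) = pre a (sh q U (b # V)) + pre b (sh q (a # U) V) +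
     (case q of RTheta \<theta> \<Rightarrow> fsc \<theta> (pre (a * b) (sh q U V))
              | RNij \<Rightarrow> - pre 1 (pre (a * b) (sh q U V))
              | RTD \<Rightarrow> - pre (a * b) (pre 1 (sh q U V)))"

fun shbar :: "'k rq \<Rightarrow> 'a::comm_ring_1 list \<Rightarrow> 'a list \<Rightarrow> ('a list \<Rightarrow> 'k::field)" where
  "shbar q (a # U) (b # V) = pre (a * b) (sh q U V)"
| "shbar q _ _ = 0"

definition pmul :: "'k rq \<Rightarrow> ('a::comm_ring_1 list \<Rightarrow> 'k::field) \<Rightarrow> ('a list \<Rightarrow> 'k) \<Rightarrow> ('a list \<Rightarrow> 'k)" where
  "pmul q F G = (\<Sum>u\<in>supp F. \<Sum>v\<in>supp G. fsc (F u * G v) (shbar q u v))"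

definition punit :: "'a::comm_ring_1 list \<Rightarrow> 'k::field" where
  "punit = wsingle [1]"

definition PA :: "('a::comm_ring_1 list \<Rightarrow> 'k::zero) \<Rightarrow> ('a list \<Rightarrow> 'k)" where
  "PA F = pre 1 F"

definition iA :: "'a \<Rightarrow> ('a list \<Rightarrow> 'k::{zero,one})" where
  "iA a = wsingle [a]"

definition tdag :: "('a \<Rightarrow> 'a) \<Rightarrow> ('a list \<Rightarrow> 'k::field) \<Rightarrow> ('a list \<Rightarrow> 'k)" where
  "tdag d F = (\<Sum>u\<in>supp F. fsc (F u) (wsingle (map d u)))"

inductive_set NR :: "('k::field \<Rightarrow> 'a \<Rightarrow> 'a) \<Rightarrow> ('a::plus list \<Rightarrow> 'k) set" for s where
  zero: "0 \<in> NR s"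
| add: "F \<in> NR s \<Longrightarrow> G \<in> NR s \<Longrightarrow> F + G \<in> NR s"
| scale: "F \<in> NR s \<Longrightarrow> fsc c F \<in> NR s"
| rel_scale: "wsingle (u @ [s c a] @ v) - fsc c (wsingle (u @ [a] @ v)) \<in> NR s"
| rel_add: "wsingle (u @ [a + b] @ v) - wsingle (u @ [a] @ v) - wsingle (u @ [b] @ v) \<in> NR s"

definition teq :: "('k::field \<Rightarrow> 'a \<Rightarrow> 'a) \<Rightarrow> ('a::plus list \<Rightarrow> 'k) \<Rightarrow> ('a list \<Rightarrow> 'k) \<Rightarrow> bool" where
  "teq s F G \<longleftrightarrow> F - G \<in> NR s"

definition tplus_inv_comm_rq :: "('k::field \<Rightarrow> 'a \<Rightarrow> 'a) \<Rightarrow> ('a::comm_ring_1 \<Rightarrow> 'a) \<Rightarrow> 'k rq \<Rightarrow> bool" where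
  "tplus_inv_comm_rq s d q \<longleftrightarrow>
    \<comment> \<open>the operations are well defined on the quotient\<close>
    NR s \<subseteq> (TP::('a list \<Rightarrow> 'k) set) \<and> (punit::'a list \<Rightarrow> 'k) \<in> TP
    \<and> (\<forall>F\<in>(TP::('a list \<Rightarrow> 'k) set). \<forall>G\<in>(TP::('a list \<Rightarrow> 'k) set). F + G \<in> TP \<and> pmul q F G \<in> TP)
    \<and> (\<forall>c::'k. \<forall>F\<in>(TP::('a list \<Rightarrow> 'k) set). fsc c F \<in> TP) \<and> (\<forall>F\<in>(TP::('a list \<Rightarrow> 'k) set). PA F \<in> TP \<and> tdag d F \<in> TP)
    \<and> (\<forall>F\<in>NR s. \<forall>G\<in>(TP::('a list \<Rightarrow> 'k) set). pmul q F G \<in> NR s \<and> pmul q G F \<in> NR s)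
    \<and> (\<forall>F\<in>NR s. PA F \<in> NR s \<and> tdag d F \<in> NR s)
    \<comment> \<open>commutative unital K-algebra\<close>
    \<and> (\<forall>F\<in>(TP::('a list \<Rightarrow> 'k) set). \<forall>G\<in>(TP::('a list \<Rightarrow> 'k) set). \<forall>H\<in>(TP::('a list \<Rightarrow> 'k) set). teq s (pmul q (pmul q F G) H) (pmul q F (pmul q G H)))
    \<and> (\<forall>F\<in>(TP::('a list \<Rightarrow> 'k) set). \<forall>G\<in>(TP::('a list \<Rightarrow> 'k) set). teq s (pmul q F G) (pmul q G F))
    \<and> (\<forall>F\<in>(TP::('a list \<Rightarrow> 'k) set). teq s (pmul q punit F) F)
    \<and> (\<forall>F\<in>(TP::('a list \<Rightarrow> 'k) set). \<forall>G\<in>(TP::('a list \<Rightarrow> 'k) set). \<forall>H\<in>(TP::('a list \<Rightarrow> 'k) set). teq s (pmul q F (G + H)) (pmul q F G + pmul q F H))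
    \<and> (\<forall>c::'k. \<forall>F\<in>(TP::('a list \<Rightarrow> 'k) set). \<forall>G\<in>(TP::('a list \<Rightarrow> 'k) set). teq s (pmul q (fsc c F) G) (fsc c (pmul q F G)))
    \<comment> \<open>P_A is linear and satisfies the R_q identity\<close>
    \<and> (\<forall>F\<in>(TP::('a list \<Rightarrow> 'k) set). \<forall>G\<in>(TP::('a list \<Rightarrow> 'k) set). teq s (PA (F + G)) (PA F + PA G))
    \<and> (\<forall>c::'k. \<forall>F\<in>(TP::('a list \<Rightarrow> 'k) set). teq s (PA (fsc c F)) (fsc c (PA F)))
    \<and> (\<forall>F\<in>(TP::('a list \<Rightarrow> 'k) set). \<forall>G\<in>(TP::('a list \<Rightarrow> 'k) set). teq s (pmul q (PA F) (PA G))
          (PA (pmul q (PA F) G + pmul q F (PA G)) +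
           (case q of RTheta \<theta> \<Rightarrow> fsc \<theta> (PA (pmul q F G))
                    | RNij \<Rightarrow> - PA (PA (pmul q F G))
                    | RTD \<Rightarrow> - PA (pmul q (pmul q F (PA punit)) G))))
    \<comment> \<open>dag is an involution commuting with P_A\<close>
    \<and> (\<forall>F\<in>(TP::('a list \<Rightarrow> 'k) set). \<forall>G\<in>(TP::('a list \<Rightarrow> 'k) set). teq s (tdag d (F + G)) (tdag d F + tdag d G))
    \<and> (\<forall>c::'k. \<forall>F\<in>(TP::('a list \<Rightarrow> 'k) set). teq s (tdag d (fsc c F)) (fsc c (tdag d F)))
    \<and> (\<forall>F\<in>(TP::('a list \<Rightarrow> 'k) set). teq s (tdag d (tdag d F)) F)
    \<and> (\<forall>F\<in>(TP::('a list \<Rightarrow> 'k) set). \<forall>G\<in>(TP::('a list \<Rightarrow> 'k) set). teq s (tdag d (pmul q F G)) (pmul q (tdag d G) (tdag d F)))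
    \<and> (\<forall>F\<in>(TP::('a list \<Rightarrow> 'k) set). teq s (PA (tdag d F)) (tdag d (PA F)))"

text \<open>An R_q-algebra morphism T^+(A) -> X, given as a map on representatives that
  vanishes on the relations (i.e. descends to the quotient).\<close>
definition tplus_rq_mor :: "('k::field \<Rightarrow> 'a \<Rightarrow> 'a) \<Rightarrow> 'k rq \<Rightarrow> ('k \<Rightarrow> 'x \<Rightarrow> 'x) \<Rightarrow> ('x::comm_ring_1 \<Rightarrow> 'x)
    \<Rightarrow> (('a::comm_ring_1 list \<Rightarrow> 'k) \<Rightarrow> 'x) \<Rightarrow> bool" where
  "tplus_rq_mor s q sX PX \<Phi> \<longleftrightarrow>
    (\<forall>F\<in>NR s. \<Phi> F = 0)
    \<and> (\<forall>F\<in>TP. \<forall>G\<in>TP. \<Phi> (F + G) = \<Phi> F + \<Phi> G)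
    \<and> (\<forall>c. \<forall>F\<in>TP. \<Phi> (fsc c F) = sX c (\<Phi> F))
    \<and> \<Phi> punit = 1
    \<and> (\<forall>F\<in>TP. \<forall>G\<in>TP. \<Phi> (pmul q F G) = \<Phi> F * \<Phi> G)
    \<and> (\<forall>F\<in>TP. \<Phi> (PA F) = PX (\<Phi> F))"

end

theory Submission
  imports Defs "HOL.Modules"
begin

text \<open>Elements of T^+(A) are represented by finitely supported K-valued functions on words; the
  multilinearity relations NR form a separate subspace. The products, P_A and the involution are
  defined word by word, so associativity, commutativity, the R_q identity and the compatibilities
  with the involution already hold for representatives, and the relations only have to be shown
  stable: every construction is linear modulo NR in each letter of a word.

  Associativity of the shuffle product on words is proved by induction on the total length: the
  recursion expands a triple product into seven terms, and commutativity turns each of them into a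
  triple product of shorter words in cyclically rotated order.

  For the universal property, the word a_0 a_1 ... a_n is sent to
  \<phi>(a_0) P(\<phi>(a_1) P(... P(\<phi>(a_n)) ...)), and the recursion of the shuffle product becomes the
  R_q identity in X. For TD-algebras one also needs P(w) = P(1) w for w in the range of P, which is
  the TD identity with one argument equal to 1. Uniqueness holds because
  a_0 a_1 ... a_n = i_A(a_0) P_A(a_1 ... a_n).\<close>

lemma sum_fun_apply: "(\<Sum>u\<in>S. f u) x = (\<Sum>u\<in>S. f u x)"
  by (induct S rule: infinite_finite_induct) auto

lemma fsc_apply [simp]: "fsc c F xs = c * F xs" by (simp add: fsc_def)
lemma wsingle_apply: "wsingle u xs = (if xs = u then 1 else 0)" by (simp add: wsingle_def)
lemma supp_iff [simp]: "u \<in> supp F \<longleftrightarrow> F u \<noteq> 0" by (simp add: supp_def)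
lemma FS_iff: "F \<in> FS \<longleftrightarrow> finite (supp F)" by (simp add: FS_def)
lemma TP_iff: "F \<in> TP \<longleftrightarrow> F \<in> FS \<and> F [] = 0" by (simp add: TP_def)

lemma supp_wsingle: "supp (wsingle u :: _ \<Rightarrow> 'k::zero_neq_one) = {u}"
  by (auto simp: supp_def wsingle_def)

lemma FS_0 [simp]: "0 \<in> FS" by (simp add: FS_iff supp_def)
lemma FS_add [simp]: "F \<in> FS \<Longrightarrow> G \<in> FS \<Longrightarrow> (F + G :: _ \<Rightarrow> 'k::comm_ring_1) \<in> FS"
  unfolding FS_iff by (rule finite_subset[of _ "supp F \<union> supp G"]) (auto simp: supp_def)
lemma FS_neg [simp]: "F \<in> FS \<Longrightarrow> (- F :: _ \<Rightarrow> 'k::comm_ring_1) \<in> FS"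
  unfolding FS_iff by (rule finite_subset[of _ "supp F"]) (auto simp: supp_def)
lemma FS_diff [simp]: "F \<in> FS \<Longrightarrow> G \<in> FS \<Longrightarrow> (F - G :: _ \<Rightarrow> 'k::comm_ring_1) \<in> FS"
  using FS_add[of F "-G"] by simp
lemma FS_fsc [simp]: "F \<in> FS \<Longrightarrow> (fsc c F :: _ \<Rightarrow> 'k::comm_ring_1) \<in> FS"
  unfolding FS_iff by (rule finite_subset[of _ "supp F"]) (auto simp: supp_def)
lemma FS_wsingle [simp]: "(wsingle u :: _ \<Rightarrow> 'k::comm_ring_1) \<in> FS"
  by (simp add: FS_iff supp_wsingle)
lemma FS_sum: "finite S \<Longrightarrow> (\<And>u. u \<in> S \<Longrightarrow> f u \<in> FS) \<Longrightarrow> (\<Sum>u\<in>S. f u :: _ \<Rightarrow> 'k::comm_ring_1) \<in> FS"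
  by (induct S rule: finite_induct) auto

lemma pre_Nil [simp]: "pre a F [] = 0" by (simp add: pre_def)
lemma pre_Cons [simp]: "pre a F (y # ys) = (if y = a then F ys else 0)" by (simp add: pre_def)

lemma supp_pre: "supp (pre a F) \<subseteq> Cons a ` supp (F :: _ \<Rightarrow> 'k::comm_ring_1)"
proof
  fix xs assume "xs \<in> supp (pre a F)"
  then show "xs \<in> Cons a ` supp F" by (cases xs) (auto split: if_splits)
qed

lemma FS_pre [simp]: "F \<in> FS \<Longrightarrow> (pre a F :: _ \<Rightarrow> 'k::comm_ring_1) \<in> FS"
  unfolding FS_iff by (rule finite_subset[OF supp_pre]) simp

lemma fsc_add: "fsc c (F + G) = fsc c F + fsc c (G :: _ \<Rightarrow> 'k::comm_ring_1)"
  by (simp add: fun_eq_iff algebra_simps)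
lemma fsc_fsc: "fsc c (fsc d F) = fsc (c * d) (F :: _ \<Rightarrow> 'k::comm_ring_1)"
  by (simp add: fun_eq_iff algebra_simps)
lemma fsc_neg: "fsc c (- F :: _ \<Rightarrow> 'k::comm_ring_1) = - fsc c F" by (simp add: fun_eq_iff)
lemma fsc_minus_one: "fsc (-1) F = - (F :: _ \<Rightarrow> 'k::comm_ring_1)" by (simp add: fun_eq_iff)

interpretation fsc: module "fsc :: 'k::comm_ring_1 \<Rightarrow> ('a list \<Rightarrow> 'k) \<Rightarrow> _"
  by unfold_locales (simp_all add: fun_eq_iff algebra_simps)

lemma module_kalg: "kalg s \<Longrightarrow> module s"
  by unfold_locales (simp_all add: kalg_def)

lemma pre_add: "pre a (F + G) = pre a F + pre a (G :: _ \<Rightarrow> 'k::comm_ring_1)"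
  by (simp add: fun_eq_iff pre_def split: list.splits)
lemma pre_neg: "pre a (- F :: _ \<Rightarrow> 'k::comm_ring_1) = - pre a F"
  by (simp add: fun_eq_iff pre_def split: list.splits)
lemma pre_diff: "pre a (F - G :: _ \<Rightarrow> 'k::comm_ring_1) = pre a F - pre a G"
  by (simp add: fun_eq_iff pre_def split: list.splits)
lemma pre_fsc: "pre a (fsc c F :: _ \<Rightarrow> 'k::comm_ring_1) = fsc c (pre a F)"
  by (simp add: fun_eq_iff pre_def split: list.splits)
lemma pre_wsingle: "pre a (wsingle u) = (wsingle (a # u) :: _ \<Rightarrow> 'k::comm_ring_1)"
  by (simp add: fun_eq_iff pre_def wsingle_def split: list.splits)

lemma TP_add: "F \<in> TP \<Longrightarrow> G \<in> TP \<Longrightarrow> F + G \<in> (TP :: (_ \<Rightarrow> 'k::comm_ring_1) set)"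
  by (simp add: TP_iff)
lemma TP_fsc: "F \<in> TP \<Longrightarrow> fsc c F \<in> (TP :: (_ \<Rightarrow> 'k::comm_ring_1) set)"
  by (simp add: TP_iff)
lemma TP_diff: "F \<in> TP \<Longrightarrow> G \<in> TP \<Longrightarrow> F - G \<in> (TP :: (_ \<Rightarrow> 'k::comm_ring_1) set)"
  by (simp add: TP_iff)
lemma TP_0: "0 \<in> (TP :: (_ \<Rightarrow> 'k::comm_ring_1) set)"
  by (simp add: TP_iff)
lemma TP_wsingle: "u \<noteq> [] \<Longrightarrow> wsingle u \<in> (TP :: (_ \<Rightarrow> 'k::comm_ring_1) set)"
  by (simp add: TP_iff wsingle_apply)
lemma TP_FS: "F \<in> TP \<Longrightarrow> F \<in> FS"
  by (simp add: TP_iff)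
lemma TP_supp_not_Nil: "F \<in> TP \<Longrightarrow> u \<in> supp F \<Longrightarrow> u \<noteq> []"
  by (auto simp: TP_iff)


definition lincomb :: "('k::zero \<Rightarrow> 'x \<Rightarrow> 'x) \<Rightarrow> ('a list \<Rightarrow> 'x) \<Rightarrow> ('a list \<Rightarrow> 'k) \<Rightarrow> 'x::comm_monoid_add"
  where "lincomb sc f F = (\<Sum>u\<in>supp F. sc (F u) (f u))"

abbreviation lin :: "('a list \<Rightarrow> ('b list \<Rightarrow> 'k)) \<Rightarrow> ('a list \<Rightarrow> 'k) \<Rightarrow> ('b list \<Rightarrow> 'k::field)"
  where "lin \<equiv> lincomb fsc"

context module
begin

lemma lincomb_superset:
  "finite S \<Longrightarrow> supp F \<subseteq> S \<Longrightarrow> lincomb scale f F = (\<Sum>u\<in>S. scale (F u) (f u))"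
  unfolding lincomb_def by (rule sum.mono_neutral_left) auto

lemma lincomb_add:
  assumes "F \<in> FS" "G \<in> FS"
  shows "lincomb scale f (F + G) = lincomb scale f F + lincomb scale f G"
proof -
  let ?S = "supp F \<union> supp G"
  have S: "finite ?S" using assms by (simp add: FS_iff)
  have "lincomb scale f (F + G) = (\<Sum>u\<in>?S. scale ((F + G) u) (f u))"
    by (rule lincomb_superset[OF S]) (auto simp: supp_def)
  also have "\<dots> = lincomb scale f F + lincomb scale f G"
    by (simp add: lincomb_superset[OF S] scale_left_distrib sum.distrib)
  finally show ?thesis .
qed

lemma lincomb_fsc:
  assumes "F \<in> FS"
  shows "lincomb scale f (fsc c F) = scale c (lincomb scale f F)"
proof -
  have "lincomb scale f (fsc c F) = (\<Sum>u\<in>supp F. scale (c * F u) (f u))"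
    using assms by (subst lincomb_superset[of "supp F"]) (auto simp: FS_iff)
  then show ?thesis by (simp add: lincomb_def scale_sum_right)
qed

lemma lincomb_zero [simp]: "lincomb scale f 0 = 0"
  by (simp add: lincomb_def supp_def)

lemma lincomb_neg: "F \<in> FS \<Longrightarrow> lincomb scale f (- F) = - lincomb scale f F"
  using lincomb_fsc[where c="-1"] by (simp add: fsc_minus_one)

lemma lincomb_diff:
  "F \<in> FS \<Longrightarrow> G \<in> FS \<Longrightarrow> lincomb scale f (F - G) = lincomb scale f F - lincomb scale f G"
  using lincomb_add[of F "-G" f] lincomb_neg[of G f] by simp

lemma lincomb_wsingle [simp]: "lincomb scale f (wsingle u) = f u"
  by (simp add: lincomb_def supp_wsingle) (simp add: wsingle_def)

lemma lincomb_fun_add: "lincomb scale (\<lambda>u. f u + g u) F = lincomb scale f F + lincomb scale g F"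
  by (simp add: lincomb_def scale_right_distrib sum.distrib)

lemma lincomb_fun_scale: "lincomb scale (\<lambda>u. scale c (f u)) F = scale c (lincomb scale f F)"
  by (simp add: lincomb_def scale_sum_right mult.commute)

lemma lincomb_fun_diff: "lincomb scale (\<lambda>u. f u - g u) F = lincomb scale f F - lincomb scale g F"
  by (simp add: lincomb_def scale_right_diff_distrib sum_subtractf)

lemma lincomb_cong: "(\<And>u. u \<in> supp F \<Longrightarrow> f u = g u) \<Longrightarrow> lincomb scale f F = lincomb scale g F"
  by (simp add: lincomb_def)

end

lemma lincomb_map:
  fixes L :: "'x::ab_group_add \<Rightarrow> 'y::ab_group_add"
  assumes add: "\<And>x y. x \<in> D \<Longrightarrow> y \<in> D \<Longrightarrow> L (x + y) = L x + L y"
    and scale: "\<And>c x. x \<in> D \<Longrightarrow> L (sc c x) = sc' c (L x)"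
    and D: "\<And>x y. x \<in> D \<Longrightarrow> y \<in> D \<Longrightarrow> x + y \<in> D" "\<And>c x. x \<in> D \<Longrightarrow> sc c x \<in> D" "0 \<in> D"
    and f: "\<And>u. u \<in> supp F \<Longrightarrow> f u \<in> D"
  shows "L (lincomb sc f F) = lincomb sc' (\<lambda>u. L (f u)) F"
proof -
  have L0: "L 0 = 0" using add[OF D(3) D(3)] by simp
  have "L (\<Sum>u\<in>S. sc (F u) (f u)) = (\<Sum>u\<in>S. sc' (F u) (L (f u))) \<and> (\<Sum>u\<in>S. sc (F u) (f u)) \<in> D"
    if "finite S" "S \<subseteq> supp F" for S
    using that
  proof (induct S rule: finite_induct)
    case (insert u S)
    then have "sc (F u) (f u) \<in> D" using D(2) f by blast
    with insert show ?case by (simp add: add D(1) scale f)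
  qed (simp add: L0 D(3))
  then show ?thesis
    by (cases "finite (supp F)") (auto simp: lincomb_def L0)
qed

lemma lin_apply: "lin f F xs = (\<Sum>u\<in>supp F. F u * f u xs)"
  by (simp add: lincomb_def sum_fun_apply)

lemma lin_wsingle_self: "F \<in> FS \<Longrightarrow> lin wsingle F = F"
proof (rule ext)
  fix xs assume "F \<in> FS"
  then have "finite (supp F)" by (simp add: FS_iff)
  moreover have "lin wsingle F xs = (\<Sum>u\<in>supp F. if u = xs then F u else 0)"
    unfolding lin_apply by (rule sum.cong) (auto simp: wsingle_def)
  ultimately show "lin wsingle F xs = F xs" by simp
qed

lemma FS_lin: "(\<And>u. u \<in> supp F \<Longrightarrow> f u \<in> FS) \<Longrightarrow> (lin f F :: _ \<Rightarrow> 'k::field) \<in> FS"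
  unfolding lincomb_def by (cases "finite (supp F)") (auto intro!: FS_sum)


text \<open>From here on combinations are handled through linearity, not pointwise.\<close>
declare plus_fun_apply [simp del] fsc_apply [simp del] times_fun_apply [simp del]
  minus_apply [simp del] uminus_apply [simp del] zero_fun_apply [simp del]

definition fs_linear :: "(('a list \<Rightarrow> 'k::field) \<Rightarrow> ('b list \<Rightarrow> 'k)) \<Rightarrow> bool" where
  "fs_linear L \<longleftrightarrow> (\<forall>x\<in>FS. \<forall>y\<in>FS. L (x + y) = L x + L y) \<and> (\<forall>c. \<forall>x\<in>FS. L (fsc c x) = fsc c (L x))
     \<and> (\<forall>x\<in>FS. L x \<in> FS)"

lemma fs_linearD:
  assumes "fs_linear L"
  shows "x \<in> FS \<Longrightarrow> y \<in> FS \<Longrightarrow> L (x + y) = L x + L y"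
    and "x \<in> FS \<Longrightarrow> L (fsc c x) = fsc c (L x)"
    and "x \<in> FS \<Longrightarrow> L x \<in> FS"
  using assms by (auto simp: fs_linear_def)

lemma fs_linearI:
  assumes "\<And>x y. x \<in> FS \<Longrightarrow> y \<in> FS \<Longrightarrow> L (x + y) = L x + L y"
    and "\<And>c x. x \<in> FS \<Longrightarrow> L (fsc c x) = fsc c (L x)"
    and "\<And>x. x \<in> FS \<Longrightarrow> L x \<in> FS"
  shows "fs_linear L"
  using assms by (auto simp: fs_linear_def)

lemma fs_linear_0: "fs_linear L \<Longrightarrow> L 0 = 0"
  using fs_linearD(1)[of L 0 0] by simp

lemma fs_linear_neg: "fs_linear L \<Longrightarrow> x \<in> FS \<Longrightarrow> L (- x) = - L x"
  using fs_linearD(2)[of L x "-1"] by (simp add: fsc_minus_one)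

lemma fs_linear_diff: "fs_linear L \<Longrightarrow> x \<in> FS \<Longrightarrow> y \<in> FS \<Longrightarrow> L (x - y) = L x - L y"
  using fs_linearD(1)[of L x "-y"] fs_linear_neg[of L y] by simp

lemma fs_linear_lin:
  assumes "fs_linear L" "\<And>u. u \<in> supp F \<Longrightarrow> f u \<in> FS"
  shows "L (lin f F) = lin (\<lambda>u. L (f u)) F"
  by (rule lincomb_map[where D=FS and sc=fsc and sc'=fsc])
    (simp_all add: fs_linearD[OF assms(1)] assms(2))

lemma fs_linear_expand: "fs_linear L \<Longrightarrow> F \<in> FS \<Longrightarrow> L F = lin (\<lambda>u. L (wsingle u)) F"
  using fs_linear_lin[of L F wsingle] lin_wsingle_self[of F] by simp

lemma fs_linear_eqI:
  assumes "fs_linear L1" "fs_linear L2" "F \<in> FS"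
    and "\<And>u. u \<in> supp F \<Longrightarrow> L1 (wsingle u) = L2 (wsingle u)"
  shows "L1 F = L2 F"
proof -
  have "L1 F = lin (\<lambda>u. L1 (wsingle u)) F" by (rule fs_linear_expand) (fact assms)+
  also have "\<dots> = lin (\<lambda>u. L2 (wsingle u)) F" by (rule fsc.lincomb_cong) (rule assms(4))
  also have "\<dots> = L2 F" by (rule fs_linear_expand[symmetric]) (fact assms)+
  finally show ?thesis .
qed

lemma fs_linear_id: "fs_linear (\<lambda>x. x)"
  by (rule fs_linearI) auto
lemma fs_linear_comp: "fs_linear L1 \<Longrightarrow> fs_linear L2 \<Longrightarrow> fs_linear (\<lambda>x. L1 (L2 x))"
  by (rule fs_linearI) (auto simp: fs_linearD)
lemma fs_linear_add: "fs_linear L1 \<Longrightarrow> fs_linear L2 \<Longrightarrow> fs_linear (\<lambda>x. L1 x + L2 x)"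
  by (rule fs_linearI) (auto simp: fs_linearD fsc_add)
lemma fs_linear_fsc: "fs_linear L \<Longrightarrow> fs_linear (\<lambda>x. fsc c (L x))"
  by (rule fs_linearI) (auto simp: fs_linearD fsc_add fsc_fsc mult.commute)
lemma fs_linear_uminus: "fs_linear L \<Longrightarrow> fs_linear (\<lambda>x. - L x)"
  by (rule fs_linearI) (auto simp: fs_linearD fsc_neg)
lemma fs_linear_pre: "fs_linear (pre a :: ('a list \<Rightarrow> 'k::field) \<Rightarrow> _)"
  by (rule fs_linearI) (auto simp: pre_add pre_fsc)
lemma fs_linear_lincomb: "(\<And>u. f u \<in> FS) \<Longrightarrow> fs_linear (lin f)"
  by (rule fs_linearI) (auto simp: fsc.lincomb_add fsc.lincomb_fsc intro!: FS_lin)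

lemma pre_eq_lin: "F \<in> FS \<Longrightarrow> pre a F = lin (\<lambda>u. wsingle (a # u)) (F :: _ \<Rightarrow> 'k::field)"
  using fs_linear_expand[OF fs_linear_pre, of F a] by (simp add: pre_wsingle)

definition fs_bilinear :: "(('a list \<Rightarrow> 'k::field) \<Rightarrow> ('b list \<Rightarrow> 'k) \<Rightarrow> ('c list \<Rightarrow> 'k)) \<Rightarrow> bool" where
  "fs_bilinear B \<longleftrightarrow> (\<forall>y\<in>FS. fs_linear (\<lambda>x. B x y)) \<and> (\<forall>x\<in>FS. fs_linear (B x))"

lemma fs_bilinearD:
  "fs_bilinear B \<Longrightarrow> y \<in> FS \<Longrightarrow> fs_linear (\<lambda>x. B x y)"
  "fs_bilinear B \<Longrightarrow> x \<in> FS \<Longrightarrow> fs_linear (B x)"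
  by (auto simp: fs_bilinear_def)

lemma fs_bilinear_FS: "fs_bilinear B \<Longrightarrow> x \<in> FS \<Longrightarrow> y \<in> FS \<Longrightarrow> B x y \<in> FS"
  using fs_bilinearD(2) fs_linearD(3) by blast

lemma fs_bilinear_eqI:
  assumes B1: "fs_bilinear B1" and B2: "fs_bilinear B2" and "F \<in> FS" "G \<in> FS"
    and "\<And>u v. u \<in> supp F \<Longrightarrow> v \<in> supp G \<Longrightarrow> B1 (wsingle u) (wsingle v) = B2 (wsingle u) (wsingle v)"
  shows "B1 F G = B2 F G"
proof (rule fs_linear_eqI[of "\<lambda>x. B1 x G" "\<lambda>x. B2 x G"])
  show "fs_linear (\<lambda>x. B1 x G)" "fs_linear (\<lambda>x. B2 x G)"
    using fs_bilinearD(1) B1 B2 \<open>G \<in> FS\<close> by blast+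
  show "F \<in> FS" by fact
  fix u assume u: "u \<in> supp F"
  show "B1 (wsingle u) G = B2 (wsingle u) G"
  proof (rule fs_linear_eqI[of "B1 (wsingle u)" "B2 (wsingle u)"])
    show "fs_linear (B1 (wsingle u))" "fs_linear (B2 (wsingle u))"
      using fs_bilinearD(2) B1 B2 FS_wsingle by blast+
    show "G \<in> FS" by fact
    show "B1 (wsingle u) (wsingle v) = B2 (wsingle u) (wsingle v)" if "v \<in> supp G" for v
      using assms(5) u that by blast
  qed
qed

definition bilincomb :: "('a list \<Rightarrow> 'b list \<Rightarrow> ('c list \<Rightarrow> 'k)) \<Rightarrow> ('a list \<Rightarrow> 'k) \<Rightarrow> ('b list \<Rightarrow> 'k)
    \<Rightarrow> ('c list \<Rightarrow> 'k::field)" where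
  "bilincomb b F G = lin (\<lambda>u. lin (b u) G) F"

lemma fs_bilinear_bilincomb:
  assumes b: "\<And>u v. b u v \<in> FS"
  shows "fs_bilinear (bilincomb b)"
  unfolding fs_bilinear_def
proof (intro conjI ballI)
  show "fs_linear (\<lambda>x. bilincomb b x y)" for y unfolding bilincomb_def
    by (rule fs_linear_lincomb) (simp add: FS_lin b)
  show "fs_linear (bilincomb b x)" for x
  proof (rule fs_linearI)
    show "bilincomb b x (y + z) = bilincomb b x y + bilincomb b x z" if "y \<in> FS" "z \<in> FS" for y z
      using that by (simp add: bilincomb_def fsc.lincomb_add fsc.lincomb_fun_add)
    show "bilincomb b x (fsc c y) = fsc c (bilincomb b x y)" if "y \<in> FS" for c y
      using that by (simp add: bilincomb_def fsc.lincomb_fsc fsc.lincomb_fun_scale)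
    show "bilincomb b x y \<in> FS" for y
      unfolding bilincomb_def by (rule FS_lin) (simp add: FS_lin b)
  qed
qed

lemma bilincomb_wsingle [simp]: "bilincomb b (wsingle u) (wsingle v) = b u v"
  by (simp add: bilincomb_def)

lemma fs_bilinear_add: "fs_bilinear B1 \<Longrightarrow> fs_bilinear B2 \<Longrightarrow> fs_bilinear (\<lambda>x y. B1 x y + B2 x y)"
  by (auto simp: fs_bilinear_def intro!: fs_linear_add)
lemma fs_bilinear_fsc: "fs_bilinear B \<Longrightarrow> fs_bilinear (\<lambda>x y. fsc c (B x y))"
  by (auto simp: fs_bilinear_def intro!: fs_linear_fsc)
lemma fs_bilinear_uminus: "fs_bilinear B \<Longrightarrow> fs_bilinear (\<lambda>x y. - B x y)"
  by (auto simp: fs_bilinear_def intro!: fs_linear_uminus)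
lemma fs_linear_comp_bilinear: "fs_linear L \<Longrightarrow> fs_bilinear B \<Longrightarrow> fs_bilinear (\<lambda>x y. L (B x y))"
  by (auto simp: fs_bilinear_def intro!: fs_linear_comp[of L])
lemma fs_bilinear_comp:
  assumes L1: "fs_linear L1" and L2: "fs_linear L2" and B: "fs_bilinear B"
  shows "fs_bilinear (\<lambda>x y. B (L1 x) (L2 y))"
  unfolding fs_bilinear_def
proof (intro conjI ballI)
  show "fs_linear (\<lambda>x. B (L1 x) (L2 y))" if "y \<in> FS" for y
    using that fs_linearD(3)[OF L2] by (intro fs_linear_comp[OF fs_bilinearD(1)[OF B] L1])
  show "fs_linear (\<lambda>y. B (L1 x) (L2 y))" if "x \<in> FS" for x
    using that fs_linearD(3)[OF L1] by (intro fs_linear_comp[OF fs_bilinearD(2)[OF B] L2])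
qed
lemma fs_bilinear_swap: "fs_bilinear B \<Longrightarrow> fs_bilinear (\<lambda>x y. B y x)"
  by (auto simp: fs_bilinear_def)


section \<open>The shuffle products on words\<close>

definition corr :: "'k rq \<Rightarrow> 'a::comm_ring_1 \<Rightarrow> ('a list \<Rightarrow> 'k) \<Rightarrow> ('a list \<Rightarrow> 'k::field)" where
  "corr q e Y = (case q of RTheta \<theta> \<Rightarrow> fsc \<theta> (pre e Y) | RNij \<Rightarrow> - pre 1 (pre e Y)
     | RTD \<Rightarrow> - pre e (pre 1 Y))"

lemma fs_linear_corr: "fs_linear (corr q e)"
  unfolding corr_def
  by (cases q) (auto intro!: fs_linear_fsc fs_linear_uminus fs_linear_comp[of "pre _"] fs_linear_pre)

lemma FS_corr [simp]: "Y \<in> FS \<Longrightarrow> corr q e Y \<in> FS"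
  using fs_linearD(3)[OF fs_linear_corr] by blast

lemma sh_Cons_Cons:
  "sh q (a # U) (b # V) = pre a (sh q U (b # V)) + pre b (sh q (a # U) V) + corr q (a * b) (sh q U V)"
  by (cases q) (simp_all add: corr_def)

declare sh.simps(3) [simp del]

lemma sh_Nil_right [simp]: "sh q U [] = wsingle U"
  by (cases U) auto

lemma shuffle_induct [case_names Nil_left Nil_right Cons_Cons]:
  assumes "\<And>V. R [] V" "\<And>a U. R (a # U) []"
    and "\<And>a U b V. R U (b # V) \<Longrightarrow> R (a # U) V \<Longrightarrow> R U V \<Longrightarrow> R (a # U) (b # V)"
  shows "R U V"
proof (induct "length U + length V" arbitrary: U V rule: less_induct)
  case less
  then show ?case
    using assms by (cases U; cases V) simp_all
qed

lemma FS_sh [simp]: "sh q U V \<in> FS"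
  by (induct U V rule: shuffle_induct) (simp_all add: sh_Cons_Cons)

lemma sh_commute: "sh q U V = sh q V U"
  by (induct U V rule: shuffle_induct) (simp_all add: sh_Cons_Cons mult.commute add_ac)

lemma FS_shbar [simp]: "shbar q U V \<in> FS"
  by (cases "(q, U, V)" rule: shbar.cases) simp_all

definition shmul :: "'k rq \<Rightarrow> ('a::comm_ring_1 list \<Rightarrow> 'k) \<Rightarrow> ('a list \<Rightarrow> 'k) \<Rightarrow> ('a list \<Rightarrow> 'k::field)" where
  "shmul q = bilincomb (sh q)"

lemma pmul_eq_bilincomb: "pmul q F G = bilincomb (shbar q) F G"
  unfolding pmul_def bilincomb_def lincomb_def
  by (rule sum.cong) (simp_all add: fsc.scale_sum_right fsc_fsc)

lemma fs_bilinear_shmul: "fs_bilinear (shmul q)"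
  unfolding shmul_def by (rule fs_bilinear_bilincomb) simp

lemma fs_bilinear_pmul: "fs_bilinear (pmul q)"
  unfolding pmul_eq_bilincomb[abs_def] by (rule fs_bilinear_bilincomb) simp

lemma shmul_wsingle [simp]: "shmul q (wsingle u) (wsingle v) = sh q u v"
  by (simp add: shmul_def)

lemma pmul_wsingle [simp]: "pmul q (wsingle u) (wsingle v) = shbar q u v"
  by (simp add: pmul_eq_bilincomb)

lemma shmul_add_left:
  "F \<in> FS \<Longrightarrow> G \<in> FS \<Longrightarrow> H \<in> FS \<Longrightarrow> shmul q (F + G) H = shmul q F H + shmul q G H"
  using fs_linearD(1)[OF fs_bilinearD(1)[OF fs_bilinear_shmul]] by blast
lemma shmul_fsc_left: "F \<in> FS \<Longrightarrow> H \<in> FS \<Longrightarrow> shmul q (fsc c F) H = fsc c (shmul q F H)"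
  using fs_linearD(2)[OF fs_bilinearD(1)[OF fs_bilinear_shmul]] by blast
lemma shmul_neg_left: "F \<in> FS \<Longrightarrow> H \<in> FS \<Longrightarrow> shmul q (- F) H = - shmul q F H"
  using fs_linear_neg[OF fs_bilinearD(1)[OF fs_bilinear_shmul]] by blast
lemma FS_shmul [simp]: "F \<in> FS \<Longrightarrow> H \<in> FS \<Longrightarrow> shmul q F H \<in> FS"
  using fs_bilinear_FS[OF fs_bilinear_shmul] by blast

lemma shmul_unit_left: "F \<in> FS \<Longrightarrow> shmul q (wsingle []) F = F"
  by (rule fs_linear_eqI[OF fs_bilinearD(2)[OF fs_bilinear_shmul FS_wsingle] fs_linear_id]) simp_all
lemma shmul_unit_right: "F \<in> FS \<Longrightarrow> shmul q F (wsingle []) = F"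
  by (rule fs_linear_eqI[OF fs_bilinearD(1)[OF fs_bilinear_shmul FS_wsingle] fs_linear_id]) simp_all

lemma shmul_commute: "F \<in> FS \<Longrightarrow> G \<in> FS \<Longrightarrow> shmul q F G = shmul q G F"
  by (rule fs_bilinear_eqI[OF fs_bilinear_shmul fs_bilinear_swap[OF fs_bilinear_shmul]])
    (simp_all add: sh_commute)

lemma shmul_pre_pre:
  assumes "F \<in> FS" "G \<in> FS"
  shows "shmul q (pre a F) (pre b G)
    = pre a (shmul q F (pre b G)) + pre b (shmul q (pre a F) G) + corr q (a * b) (shmul q F G)"
proof (rule fs_bilinear_eqI[of "\<lambda>x y. shmul q (pre a x) (pre b y)"
      "\<lambda>x y. pre a (shmul q x (pre b y)) + pre b (shmul q (pre a x) y) + corr q (a * b) (shmul q x y)"])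
  show "fs_bilinear (\<lambda>x y. shmul q (pre a x) (pre b y))"
    by (rule fs_bilinear_comp[OF fs_linear_pre fs_linear_pre fs_bilinear_shmul])
  show "fs_bilinear (\<lambda>x y. pre a (shmul q x (pre b y)) + pre b (shmul q (pre a x) y) + corr q (a * b) (shmul q x y))"
    by (intro fs_bilinear_add fs_linear_comp_bilinear[OF fs_linear_pre] fs_linear_comp_bilinear[OF fs_linear_corr]
        fs_bilinear_shmul fs_bilinear_comp[OF fs_linear_id fs_linear_pre fs_bilinear_shmul, simplified]
        fs_bilinear_comp[OF fs_linear_pre fs_linear_id fs_bilinear_shmul, simplified])
qed (use assms in \<open>simp_all add: pre_wsingle sh_Cons_Cons\<close>)

lemma shmul_TD_pre_one:
  assumes F: "F \<in> FS" and G: "G \<in> FS"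
  shows "shmul RTD (pre 1 F) G = pre 1 (shmul RTD F G)"
proof (rule fs_linear_eqI[of "shmul RTD (pre 1 F)" "\<lambda>y. pre 1 (shmul RTD F y)"])
  show "fs_linear (shmul RTD (pre 1 F))" "fs_linear (\<lambda>y. pre 1 (shmul RTD F y))"
    using F by (simp_all add: fs_bilinearD(2)[OF fs_bilinear_shmul] fs_linear_comp[OF fs_linear_pre])
  show "G \<in> FS" by fact
  show "shmul RTD (pre 1 F) (wsingle v) = pre 1 (shmul RTD F (wsingle v))" for v
  proof (induct v)
    case Nil
    then show ?case using F by (simp add: shmul_unit_right)
  next
    case (Cons b W)
    have "shmul RTD (pre 1 F) (wsingle (b # W)) = shmul RTD (pre 1 F) (pre b (wsingle W))"
      by (simp add: pre_wsingle)
    also have "\<dots> = pre 1 (shmul RTD F (pre b (wsingle W))) + pre b (shmul RTD (pre 1 F) (wsingle W))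
        + corr RTD (1 * b) (shmul RTD F (wsingle W))"
      using F by (simp add: shmul_pre_pre)
    also have "\<dots> = pre 1 (shmul RTD F (wsingle (b # W)))"
      using Cons by (simp add: corr_def pre_wsingle)
    finally show ?case .
  qed
qed

definition corr2 :: "'k rq \<Rightarrow> 'a::comm_ring_1 \<Rightarrow> ('a list \<Rightarrow> 'k) \<Rightarrow> ('a list \<Rightarrow> 'k::field)" where
  "corr2 q e Y = (case q of RTheta \<theta> \<Rightarrow> fsc (\<theta> * \<theta>) (pre e Y) | RNij \<Rightarrow> pre 1 (pre 1 (pre e Y))
     | RTD \<Rightarrow> pre e (pre 1 (pre 1 Y)))"

lemma shmul_corr_pre:
  assumes G: "G \<in> FS" and H: "H \<in> FS"
  shows "shmul q (corr q e G) (pre c H)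
    = corr q e (shmul q G (pre c H)) + pre c (shmul q (corr q e G) H) + corr2 q (e * c) (shmul q G H)"
proof (cases q)
  case (RTheta \<theta>)
  have "shmul q (corr q e G) (pre c H) = fsc \<theta> (shmul q (pre e G) (pre c H))"
    using G H by (simp add: RTheta corr_def shmul_fsc_left)
  also have "\<dots> = fsc \<theta> (pre e (shmul q G (pre c H)) + pre c (shmul q (pre e G) H)
      + fsc \<theta> (pre (e * c) (shmul q G H)))"
    using G H by (simp add: shmul_pre_pre RTheta corr_def)
  finally show ?thesis
    using G H by (simp add: RTheta corr_def corr2_def fsc_add pre_fsc fsc_fsc shmul_fsc_left)
next
  case RNij
  let ?K = "pre e G"
  have "shmul q (corr q e G) (pre c H) = - shmul q (pre 1 ?K) (pre c H)"
    using G H by (simp add: RNij corr_def shmul_neg_left)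
  also have "\<dots> = - (pre 1 (shmul q ?K (pre c H)) + pre c (shmul q (pre 1 ?K) H)
      - pre 1 (pre c (shmul q ?K H)))"
    using G H by (simp add: shmul_pre_pre RNij corr_def)
  also have "shmul q ?K (pre c H)
      = pre e (shmul q G (pre c H)) + pre c (shmul q ?K H) - pre 1 (pre (e * c) (shmul q G H))"
    using G H by (simp add: shmul_pre_pre RNij corr_def)
  finally show ?thesis
    using G H by (simp add: RNij corr_def corr2_def shmul_neg_left pre_add pre_diff pre_neg algebra_simps)
next
  case RTD
  let ?K = "pre 1 G"
  have "shmul q (corr q e G) (pre c H) = - shmul q (pre e ?K) (pre c H)"
    using G H by (simp add: RTD corr_def shmul_neg_left)
  also have "\<dots> = - (pre e (shmul q ?K (pre c H)) + pre c (shmul q (pre e ?K) H)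
      - pre (e * c) (pre 1 (shmul q ?K H)))"
    using G H by (simp add: shmul_pre_pre RTD corr_def)
  finally show ?thesis
    using G H by (simp add: RTD corr_def corr2_def shmul_TD_pre_one shmul_neg_left pre_neg algebra_simps)
qed

lemma shmul_expand3:
  fixes q :: "'k::field rq" and a :: "'a::comm_ring_1"
  defines "T \<equiv> \<lambda>u v x. shmul q (shmul q (wsingle u) (wsingle v)) (wsingle x :: 'a list \<Rightarrow> 'k)"
  shows "T (a # U) (b # V) (c # W) =
     pre a (T U (b # V) (c # W)) + pre b (T (a # U) V (c # W)) + pre c (T (a # U) (b # V) W)
   + corr q (a * c) (T U (b # V) W) + corr q (b * c) (T (a # U) V W) + corr q (a * b) (T U V (c # W))
   + corr2 q (a * b * c) (T U V W)"
proof -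
  define S1 where "S1 = sh q U (b # V)"
  define S2 where "S2 = sh q (a # U) V"
  define S3 where "S3 = sh q U V"
  have FS: "S1 \<in> FS" "S2 \<in> FS" "S3 \<in> FS" by (simp_all add: S1_def S2_def S3_def)
  have XY: "shmul q (wsingle (a # U)) (wsingle (b # V)) = pre a S1 + pre b S2 + corr q (a * b) S3"
    by (simp add: S1_def S2_def S3_def sh_Cons_Cons)
  have Z: "wsingle (c # W) = (pre c (wsingle W) :: 'a list \<Rightarrow> 'k)" by (simp add: pre_wsingle)
  have pre_c: "pre c (shmul q (pre a S1) (wsingle W)) + pre c (shmul q (pre b S2) (wsingle W))
      + pre c (shmul q (corr q (a * b) S3) (wsingle W)) = pre c (T (a # U) (b # V) W)"
    using FS unfolding T_def XY by (simp add: shmul_add_left pre_add)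
  have "T (a # U) (b # V) (c # W) = shmul q (pre a S1) (pre c (wsingle W))
      + shmul q (pre b S2) (pre c (wsingle W)) + shmul q (corr q (a * b) S3) (pre c (wsingle W))"
    using FS unfolding T_def XY Z by (simp add: shmul_add_left)
  also have "\<dots> = pre a (shmul q S1 (pre c (wsingle W))) + pre c (shmul q (pre a S1) (wsingle W))
      + corr q (a * c) (shmul q S1 (wsingle W))
      + (pre b (shmul q S2 (pre c (wsingle W))) + pre c (shmul q (pre b S2) (wsingle W))
      + corr q (b * c) (shmul q S2 (wsingle W)))
      + (corr q (a * b) (shmul q S3 (pre c (wsingle W))) + pre c (shmul q (corr q (a * b) S3) (wsingle W))
      + corr2 q (a * b * c) (shmul q S3 (wsingle W)))"
    using FS by (simp add: shmul_pre_pre shmul_corr_pre)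
  finally show ?thesis
    using pre_c by (simp add: T_def S1_def S2_def S3_def Z algebra_simps)
qed

lemma shmul_assoc_wsingle:
  "shmul q (shmul q (wsingle u) (wsingle v)) (wsingle x)
    = shmul q (wsingle u) (shmul q (wsingle v) (wsingle x) :: 'a::comm_ring_1 list \<Rightarrow> 'k::field)"
proof (induct "length u + length v + length x" arbitrary: u v x rule: less_induct)
  case less
  define T where "T u v x = shmul q (shmul q (wsingle u) (wsingle v)) (wsingle x :: 'a list \<Rightarrow> 'k)"
    for u v x
  have rotate: "T p r t = T r t p" if "length p + length r + length t < length u + length v + length x"
    for p r t
    using less that by (simp add: T_def shmul_commute)
  note expand = shmul_expand3[where q=q and 'a='a and 'k='k, folded T_def]
  show ?case
  proof (cases "u = [] \<or> v = [] \<or> x = []")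
    case True
    then show ?thesis by (auto simp: shmul_unit_left shmul_unit_right)
  next
    case False
    then obtain a U b V c W where u: "u = a # U" and v: "v = b # V" and x: "x = c # W"
      by (meson neq_Nil_conv)
    have r: "T U (b # V) (c # W) = T (b # V) (c # W) U" "T (a # U) V (c # W) = T V (c # W) (a # U)"
      "T (a # U) (b # V) W = T (b # V) W (a # U)" "T U (b # V) W = T (b # V) W U"
      "T (a # U) V W = T V W (a # U)" "T U V (c # W) = T V (c # W) U" "T U V W = T V W U"
      by (rule rotate, simp add: u v x)+
    have "T v x u = T u v x"
      unfolding u v x expand r by (simp add: ac_simps)
    then show ?thesis by (simp add: T_def shmul_commute)
  qed
qed


lemma pmul_add_right:
  "F \<in> FS \<Longrightarrow> G \<in> FS \<Longrightarrow> H \<in> FS \<Longrightarrow> pmul q H (F + G) = pmul q H F + pmul q H G"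
  using fs_linearD(1)[OF fs_bilinearD(2)[OF fs_bilinear_pmul]] by blast
lemma pmul_fsc_left: "F \<in> FS \<Longrightarrow> H \<in> FS \<Longrightarrow> pmul q (fsc c F) H = fsc c (pmul q F H)"
  using fs_linearD(2)[OF fs_bilinearD(1)[OF fs_bilinear_pmul]] by blast

lemma pmul_pre_pre:
  "F \<in> FS \<Longrightarrow> G \<in> FS \<Longrightarrow> pmul q (pre a F) (pre b G) = pre (a * b) (shmul q F G)"
  by (rule fs_bilinear_eqI[of "\<lambda>x y. pmul q (pre a x) (pre b y)" "\<lambda>x y. pre (a * b) (shmul q x y)"])
    (simp_all add: fs_bilinear_comp[OF fs_linear_pre fs_linear_pre fs_bilinear_pmul]
      fs_linear_comp_bilinear[OF fs_linear_pre fs_bilinear_shmul] pre_wsingle)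

lemma pmul_assoc:
  assumes F: "F \<in> TP" and G: "G \<in> TP" and H: "H \<in> TP"
  shows "pmul q (pmul q F G) H = pmul q F (pmul q G H)"
proof (rule fs_bilinear_eqI[of "\<lambda>x y. pmul q (pmul q x y) H" "\<lambda>x y. pmul q x (pmul q y H)"])
  have mul_H: "fs_linear (\<lambda>x. pmul q x H)"
    using H by (simp add: TP_FS fs_bilinearD(1)[OF fs_bilinear_pmul])
  show "fs_bilinear (\<lambda>x y. pmul q (pmul q x y) H)"
    by (rule fs_linear_comp_bilinear[OF mul_H fs_bilinear_pmul])
  show "fs_bilinear (\<lambda>x y. pmul q x (pmul q y H))"
    by (rule fs_bilinear_comp[OF fs_linear_id mul_H fs_bilinear_pmul, simplified])
  show "F \<in> FS" "G \<in> FS" using F G by (simp_all add: TP_FS)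
  fix u v assume u: "u \<in> supp F" and v: "v \<in> supp G"
  obtain a U where uu: "u = a # U" using TP_supp_not_Nil[OF F u] neq_Nil_conv by meson
  obtain b V where vv: "v = b # V" using TP_supp_not_Nil[OF G v] neq_Nil_conv by meson
  show "pmul q (pmul q (wsingle u) (wsingle v)) H = pmul q (wsingle u) (pmul q (wsingle v) H)"
  proof (rule fs_linear_eqI[of "pmul q (pmul q (wsingle u) (wsingle v))"
        "\<lambda>z. pmul q (wsingle u) (pmul q (wsingle v) z)"])
    show "fs_linear (pmul q (pmul q (wsingle u) (wsingle v)))"
      "fs_linear (\<lambda>z. pmul q (wsingle u) (pmul q (wsingle v) z))"
      by (simp_all add: fs_bilinearD(2)[OF fs_bilinear_pmul] fs_linear_comp)
    show "H \<in> FS" by (rule TP_FS[OF H])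
    fix x assume x: "x \<in> supp H"
    obtain c W where xx: "x = c # W" using TP_supp_not_Nil[OF H x] neq_Nil_conv by meson
    have "pmul q (pmul q (wsingle u) (wsingle v)) (wsingle x)
        = pmul q (pre (a * b) (shmul q (wsingle U) (wsingle V))) (pre c (wsingle W))"
      by (simp add: uu vv xx pre_wsingle)
    also have "\<dots> = pre (a * b * c) (shmul q (shmul q (wsingle U) (wsingle V)) (wsingle W))"
      by (rule pmul_pre_pre) simp_all
    also have "\<dots> = pre (a * (b * c)) (shmul q (wsingle U) (shmul q (wsingle V) (wsingle W)))"
      by (simp only: shmul_assoc_wsingle mult.assoc)
    also have "\<dots> = pmul q (pre a (wsingle U)) (pre (b * c) (shmul q (wsingle V) (wsingle W)))"
      by (rule pmul_pre_pre[symmetric]) simp_all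
    also have "\<dots> = pmul q (wsingle u) (pmul q (wsingle v) (wsingle x))"
      by (simp add: uu vv xx pre_wsingle)
    finally show "pmul q (pmul q (wsingle u) (wsingle v)) (wsingle x)
        = pmul q (wsingle u) (pmul q (wsingle v) (wsingle x))" .
  qed
qed

lemma shbar_commute: "shbar q u v = shbar q v u"
  by (cases "(q, u, v)" rule: shbar.cases) (auto simp: sh_commute mult.commute)

lemma pmul_commute: "F \<in> FS \<Longrightarrow> G \<in> FS \<Longrightarrow> pmul q F G = pmul q G F"
  by (rule fs_bilinear_eqI[OF fs_bilinear_pmul fs_bilinear_swap[OF fs_bilinear_pmul]])
    (simp_all add: shbar_commute)

lemma FS_punit [simp]: "punit \<in> FS" by (simp add: punit_def)
lemma TP_punit: "punit \<in> TP" by (simp add: punit_def TP_wsingle)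

lemma pmul_punit_left: "F \<in> TP \<Longrightarrow> pmul q punit F = F"
proof (rule fs_linear_eqI[OF fs_bilinearD(2)[OF fs_bilinear_pmul FS_punit] fs_linear_id])
  assume F: "F \<in> TP"
  then show "F \<in> FS" by (rule TP_FS)
  fix u assume "u \<in> supp F"
  then obtain b V where "u = b # V" using TP_supp_not_Nil[OF F] neq_Nil_conv by meson
  then show "pmul q punit (wsingle u) = wsingle u" by (simp add: punit_def pre_wsingle)
qed

lemma TP_pmul: "F \<in> TP \<Longrightarrow> G \<in> TP \<Longrightarrow> pmul q F G \<in> TP"
proof -
  have shbar_Nil: "shbar q u v [] = 0" for u v
    by (cases "(q, u, v)" rule: shbar.cases) (simp_all add: zero_fun_apply)
  have "pmul q F G [] = 0"
    by (simp add: pmul_eq_bilincomb bilincomb_def lin_apply shbar_Nil)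
  moreover assume "F \<in> TP" "G \<in> TP"
  ultimately show ?thesis by (simp add: TP_iff fs_bilinear_FS[OF fs_bilinear_pmul])
qed

lemma fs_linear_PA: "fs_linear (PA :: ('a::comm_ring_1 list \<Rightarrow> 'k::field) \<Rightarrow> _)"
  unfolding PA_def[abs_def] by (rule fs_linear_pre)

lemma TP_PA: "F \<in> TP \<Longrightarrow> PA F \<in> (TP :: ('a::comm_ring_1 list \<Rightarrow> 'k::field) set)"
  by (simp add: TP_iff PA_def)

lemma PA_wsingle: "PA (wsingle u) = (wsingle (1 # u) :: _ \<Rightarrow> 'k::field)"
  by (simp add: PA_def pre_wsingle)


section \<open>The products respect the multilinearity relations\<close>

lemma NR_TP: "N \<in> NR s \<Longrightarrow> N \<in> TP"
  by (induct rule: NR.induct) (auto intro: TP_0 TP_add TP_fsc TP_diff TP_wsingle)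

lemma NR_FS: "N \<in> NR s \<Longrightarrow> N \<in> FS"
  using NR_TP TP_FS by blast

lemma NR_uminus: "N \<in> NR s \<Longrightarrow> - N \<in> NR s"
  using NR.scale[of N s "-1"] by (simp add: fsc_minus_one)

lemma NR_sum: "(\<And>u. u \<in> S \<Longrightarrow> g u \<in> NR s) \<Longrightarrow> sum g S \<in> NR s"
  by (induct S rule: infinite_finite_induct) (auto intro: NR.zero NR.add)

lemma lin_NR_values: "(\<And>u. u \<in> supp F \<Longrightarrow> f u \<in> NR s) \<Longrightarrow> lin f F \<in> NR s"
  unfolding lincomb_def by (rule NR_sum) (simp add: NR.scale)

definition NR_linear :: "('k::field \<Rightarrow> 'a \<Rightarrow> 'a) \<Rightarrow> ('a::plus \<Rightarrow> ('a list \<Rightarrow> 'k)) \<Rightarrow> bool" where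
  "NR_linear s g \<longleftrightarrow> (\<forall>a. g a \<in> FS) \<and> (\<forall>c a. g (s c a) - fsc c (g a) \<in> NR s)
     \<and> (\<forall>a b. g (a + b) - g a - g b \<in> NR s)"

lemma NR_linear_wsingle: "NR_linear s (\<lambda>x. wsingle (u @ x # w))"
  using NR.rel_scale[of u s _ _ w] NR.rel_add[of u _ _ w s] by (simp add: NR_linear_def)

lemma NR_linear_add:
  assumes "NR_linear s g" "NR_linear s h"
  shows "NR_linear s (\<lambda>x. g x + h x)"
proof -
  have scale: "g (s c a) + h (s c a) - fsc c (g a + h a)
      = (g (s c a) - fsc c (g a)) + (h (s c a) - fsc c (h a))" for c a
    by (simp add: fsc_add algebra_simps)
  have add: "g (a + b) + h (a + b) - (g a + h a) - (g b + h b)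
      = (g (a + b) - g a - g b) + (h (a + b) - h a - h b)" for a b
    by (simp add: algebra_simps)
  show ?thesis
    using assms unfolding NR_linear_def scale add by (auto intro: NR.add)
qed

lemma NR_linear_map:
  assumes L: "fs_linear L" and NR_L: "\<And>N. N \<in> NR s \<Longrightarrow> L N \<in> NR s" and g: "NR_linear s g"
  shows "NR_linear s (\<lambda>x. L (g x))"
proof -
  have FS: "g a \<in> FS" for a using g by (simp add: NR_linear_def)
  have "L (g (s c a)) - fsc c (L (g a)) = L (g (s c a) - fsc c (g a))" for c a
    using FS by (simp add: fs_linear_diff[OF L] fs_linearD(2)[OF L])
  moreover have "L (g (a + b)) - L (g a) - L (g b) = L (g (a + b) - g a - g b)" for a b
    using FS by (simp add: fs_linear_diff[OF L])
  ultimately show ?thesis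
    using g FS by (simp add: NR_linear_def NR_L fs_linearD(3)[OF L])
qed

lemma NR_linear_compose:
  "klinear s s h \<Longrightarrow> NR_linear s g \<Longrightarrow> NR_linear s (\<lambda>x. g (h x))"
  by (simp add: NR_linear_def klinear_def)

lemma klinear_mult_right: "kalg s \<Longrightarrow> klinear s s (\<lambda>x. x * b)"
  by (simp add: klinear_def kalg_def distrib_right)

lemma NR_linear_lin:
  assumes "\<And>v. NR_linear s (\<lambda>x. h x v)"
  shows "NR_linear s (\<lambda>x. lin (h x) G)"
proof -
  have h: "\<forall>a. h a v \<in> FS" "\<forall>c a. h (s c a) v - fsc c (h a v) \<in> NR s"
    "\<forall>a b. h (a + b) v - h a v - h b v \<in> NR s" for v
    using assms by (simp_all add: NR_linear_def)
  have "lin (h (s c a)) G - fsc c (lin (h a) G) = lin (\<lambda>v. h (s c a) v - fsc c (h a v)) G" for c a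
    by (simp add: fsc.lincomb_fun_diff fsc.lincomb_fun_scale)
  moreover have "lin (h (a + b)) G - lin (h a) G - lin (h b) G = lin (\<lambda>v. h (a + b) v - h a v - h b v) G"
    for a b
    by (simp add: fsc.lincomb_fun_diff)
  ultimately show ?thesis
    using h by (simp add: NR_linear_def FS_lin lin_NR_values)
qed

lemma NR_linear_pre_letter: "NR_linear s (\<lambda>x. pre x Y)" if "Y \<in> FS"
proof -
  have "NR_linear s (\<lambda>x. lin (\<lambda>u. wsingle (x # u)) Y)"
    using NR_linear_wsingle[of s "[]"] by (intro NR_linear_lin) simp
  then show ?thesis using that by (simp add: pre_eq_lin)
qed

lemma lin_NR:
  assumes f: "\<And>u w. NR_linear s (\<lambda>x. f (u @ x # w))" and N: "N \<in> NR s"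
  shows "lin f N \<in> NR s"
  using N
proof (induct rule: NR.induct)
  case (rel_scale u c a w)
  then show ?case
    using f[of u w] by (simp add: NR_linear_def fsc.lincomb_diff fsc.lincomb_fsc)
next
  case (rel_add u a b w)
  then show ?case
    using f[of u w] by (simp add: NR_linear_def fsc.lincomb_diff fsc.lincomb_add)
qed (simp_all add: NR.intros NR_FS fsc.lincomb_add fsc.lincomb_fsc)

lemma NR_pre: "N \<in> NR s \<Longrightarrow> pre y N \<in> NR s"
  using lin_NR[of s "\<lambda>u. wsingle (y # u)" N] NR_linear_wsingle[of s "y # _"]
  by (simp add: pre_eq_lin NR_FS)

lemma NR_PA: "N \<in> NR s \<Longrightarrow> PA N \<in> NR s"
  by (simp add: PA_def NR_pre)

lemma NR_corr: "N \<in> NR s \<Longrightarrow> corr q e N \<in> NR s"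
  by (cases q) (simp_all add: corr_def NR_pre NR_uminus NR.scale)

lemma NR_linear_corr:
  assumes "kalg s" "Y \<in> FS"
  shows "NR_linear s (\<lambda>x. corr q (x * b) Y)"
proof -
  have "NR_linear s (\<lambda>e. corr q e Y)"
  proof (cases q)
    case (RTheta \<theta>)
    then show ?thesis
      using NR_linear_map[OF fs_linear_fsc[OF fs_linear_id] NR.scale NR_linear_pre_letter[OF \<open>Y \<in> FS\<close>]]
      by (simp add: corr_def)
  next
    case RNij
    then show ?thesis
      using NR_linear_map[OF fs_linear_uminus[OF fs_linear_pre] _ NR_linear_pre_letter[OF \<open>Y \<in> FS\<close>]]
      by (simp add: corr_def NR_pre NR_uminus)
  next
    case RTD
    then show ?thesis
      using NR_linear_map[OF fs_linear_uminus[OF fs_linear_id] NR_uminus NR_linear_pre_letter[of "pre 1 Y"]]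
      by (simp add: corr_def \<open>Y \<in> FS\<close>)
  qed
  then show ?thesis by (rule NR_linear_compose[OF klinear_mult_right[OF \<open>kalg s\<close>]])
qed

lemma NR_linear_sh:
  assumes s: "kalg s"
  shows "NR_linear s (\<lambda>x. sh q (u @ x # w) V)"
proof (induct u arbitrary: V)
  case Nil
  show ?case
  proof (induct V)
    case (Cons b V)
    then show ?case
      unfolding append_Nil sh_Cons_Cons
      by (intro NR_linear_add NR_linear_pre_letter NR_linear_corr[OF s]
          NR_linear_map[OF fs_linear_pre NR_pre]) simp_all
  qed (use NR_linear_wsingle[of s "[]"] in simp)
next
  case (Cons y u)
  have IH: "NR_linear s (\<lambda>x. sh q (u @ x # w) V)" for V by (fact Cons)
  show ?case
  proof (induct V)
    case (Cons b V)
    then show ?case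
      unfolding append_Cons sh_Cons_Cons
      by (intro NR_linear_add NR_linear_map[OF fs_linear_pre NR_pre]
          NR_linear_map[OF fs_linear_corr NR_corr] IH)
  qed (use NR_linear_wsingle[of s "y # u"] in simp)
qed

lemma NR_linear_shbar:
  assumes s: "kalg s"
  shows "NR_linear s (\<lambda>x. shbar q (u @ x # w) v)"
proof (cases v)
  case Nil
  then show ?thesis by (cases u) (simp_all add: NR_linear_def NR.zero)
next
  case (Cons b V)
  then show ?thesis
  proof (cases u)
    case Nil
    then show ?thesis using Cons NR_linear_compose[OF klinear_mult_right[OF s] NR_linear_pre_letter]
      by simp
  next
    case (Cons y u')
    then show ?thesis using \<open>v = b # V\<close>
      by (simp add: NR_linear_map[OF fs_linear_pre NR_pre NR_linear_sh[OF s]])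
  qed
qed

lemma NR_pmul:
  assumes "kalg s" "N \<in> NR s"
  shows "pmul q N G \<in> NR s"
  unfolding pmul_eq_bilincomb bilincomb_def
  by (rule lin_NR[OF NR_linear_lin[OF NR_linear_shbar[OF \<open>kalg s\<close>]] \<open>N \<in> NR s\<close>])

lemma tdag_eq_lin: "tdag d F = lin (\<lambda>u. wsingle (map d u)) F"
  by (simp add: tdag_def lincomb_def)

lemma NR_tdag:
  assumes inv: "involution s d" and N: "N \<in> NR s"
  shows "tdag d N \<in> NR s"
proof -
  have "NR_linear s (\<lambda>x. wsingle (map d u @ d x # map d w))" for u w
    using inv NR_linear_compose[OF _ NR_linear_wsingle, of s d "map d u" "map d w"]
    by (simp add: involution_def)
  then show ?thesis
    unfolding tdag_eq_lin by (intro lin_NR[OF _ N]) simp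
qed


section \<open>The Rota--Baxter type identity for P_A\<close>

definition PA_corr :: "'k rq \<Rightarrow> ('a::comm_ring_1 list \<Rightarrow> 'k) \<Rightarrow> ('a list \<Rightarrow> 'k) \<Rightarrow> ('a list \<Rightarrow> 'k::field)"
  where "PA_corr q F G = (case q of RTheta \<theta> \<Rightarrow> fsc \<theta> (PA (pmul q F G))
     | RNij \<Rightarrow> - PA (PA (pmul q F G)) | RTD \<Rightarrow> - PA (pmul q (pmul q F (PA punit)) G))"

lemma fs_bilinear_PA_corr: "fs_bilinear (PA_corr q)"
proof (cases q)
  case (RTheta \<theta>)
  then show ?thesis
    using fs_bilinear_fsc[OF fs_linear_comp_bilinear[OF fs_linear_PA fs_bilinear_pmul]]
    by (simp add: PA_corr_def[abs_def])
next
  case RNij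
  then show ?thesis
    using fs_bilinear_uminus[OF fs_linear_comp_bilinear[OF fs_linear_comp[OF fs_linear_PA fs_linear_PA]
          fs_bilinear_pmul]]
    by (simp add: PA_corr_def[abs_def])
next
  case RTD
  have "fs_linear (\<lambda>x. pmul q x (PA punit))"
    by (rule fs_bilinearD(1)[OF fs_bilinear_pmul]) (simp add: PA_def)
  then show ?thesis using RTD
    fs_bilinear_uminus[OF fs_linear_comp_bilinear[OF fs_linear_PA
          fs_bilinear_comp[OF _ fs_linear_id fs_bilinear_pmul, simplified]]]
    by (simp add: PA_corr_def[abs_def])
qed

lemma sh_TD_one_Cons: "sh RTD (1 # U) V = (pre 1 (sh RTD U V) :: _ \<Rightarrow> 'k::field)"
  using shmul_TD_pre_one[of "wsingle U" "wsingle V"] by (simp add: pre_wsingle)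

lemma sh_TD_one: "sh RTD U [1] = (wsingle (1 # U) :: _ \<Rightarrow> 'k::field)"
  by (simp add: sh_commute[of _ U] sh_TD_one_Cons pre_wsingle)

lemma PA_corr_wsingle:
  "PA_corr q (wsingle (a # U)) (wsingle (b # V)) = (PA (corr q (a * b) (sh q U V)) :: _ \<Rightarrow> 'k::field)"
  by (cases q) (simp_all add: PA_corr_def corr_def PA_wsingle punit_def sh_TD_one sh_TD_one_Cons
      pre_wsingle PA_def pre_fsc pre_neg)

lemma PA_rq_identity:
  fixes F G :: "'a::comm_ring_1 list \<Rightarrow> 'k::field"
  assumes F: "F \<in> TP" and G: "G \<in> TP"
  shows "pmul q (PA F) (PA G) = PA (pmul q (PA F) G + pmul q F (PA G)) + PA_corr q F G"
proof (rule fs_bilinear_eqI[of "\<lambda>x y. pmul q (PA x) (PA y)"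
      "\<lambda>x y. PA (pmul q (PA x) y + pmul q x (PA y)) + PA_corr q x y"])
  show "fs_bilinear (\<lambda>x y. pmul q (PA x) (PA y))"
    by (rule fs_bilinear_comp[OF fs_linear_PA fs_linear_PA fs_bilinear_pmul])
  show "fs_bilinear (\<lambda>x y. PA (pmul q (PA x) y + pmul q x (PA y)) + PA_corr q x y)"
    by (intro fs_bilinear_add[OF fs_linear_comp_bilinear[OF fs_linear_PA] fs_bilinear_PA_corr]
        fs_bilinear_add fs_bilinear_comp[OF fs_linear_PA fs_linear_id fs_bilinear_pmul, simplified]
        fs_bilinear_comp[OF fs_linear_id fs_linear_PA fs_bilinear_pmul, simplified])
  show "F \<in> FS" "G \<in> FS" using F G by (simp_all add: TP_FS)
  fix u v assume "u \<in> supp F" "v \<in> supp G"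
  moreover obtain a U where "u = a # U"
    using TP_supp_not_Nil[OF F \<open>u \<in> supp F\<close>] neq_Nil_conv by meson
  moreover obtain b V where "v = b # V"
    using TP_supp_not_Nil[OF G \<open>v \<in> supp G\<close>] neq_Nil_conv by meson
  ultimately show "pmul q (PA (wsingle u)) (PA (wsingle v))
      = PA (pmul q (PA (wsingle u)) (wsingle v) + pmul q (wsingle u) (PA (wsingle v)))
        + PA_corr q (wsingle u) (wsingle v)"
    by (simp add: PA_corr_wsingle PA_wsingle) (simp add: sh_Cons_Cons PA_def pre_add add_ac)
qed


lemma involution_one: "involution s d \<Longrightarrow> d 1 = 1"
  unfolding involution_def by (metis mult_1_right)

lemma involution_mult: "involution s d \<Longrightarrow> d (x * y) = d x * (d y :: 'a::comm_ring_1)"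
  by (simp add: involution_def mult.commute)

lemma fs_linear_tdag: "fs_linear (tdag d :: ('a list \<Rightarrow> 'k::field) \<Rightarrow> _)"
  unfolding tdag_eq_lin[abs_def] by (rule fs_linear_lincomb) simp

lemma tdag_wsingle: "tdag d (wsingle u) = (wsingle (map d u) :: _ \<Rightarrow> 'k::field)"
  by (simp add: tdag_eq_lin)

lemma TP_tdag: "F \<in> TP \<Longrightarrow> tdag d F \<in> (TP :: (_ \<Rightarrow> 'k::field) set)"
  using TP_supp_not_Nil[of F]
  by (auto simp: TP_iff tdag_eq_lin lin_apply wsingle_apply FS_lin intro!: sum.neutral)

lemma tdag_pre: "X \<in> FS \<Longrightarrow> tdag d (pre e X) = (pre (d e) (tdag d X) :: _ \<Rightarrow> 'k::field)"
  by (rule fs_linear_eqI[OF fs_linear_comp[OF fs_linear_tdag fs_linear_pre]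
        fs_linear_comp[OF fs_linear_pre fs_linear_tdag]])
    (simp_all add: pre_wsingle tdag_wsingle)

lemma tdag_corr:
  "d 1 = 1 \<Longrightarrow> X \<in> FS \<Longrightarrow> tdag d (corr q e X) = (corr q (d e) (tdag d X) :: _ \<Rightarrow> 'k::field)"
  by (cases q) (simp_all add: corr_def fs_linearD(2)[OF fs_linear_tdag] fs_linear_neg[OF fs_linear_tdag]
      tdag_pre)

lemma tdag_sh:
  assumes "involution s d"
  shows "tdag d (sh q U V) = (sh q (map d U) (map d V) :: _ \<Rightarrow> 'k::field)"
  by (induct U V rule: shuffle_induct) (simp_all add: tdag_wsingle sh_Cons_Cons
      fs_linearD(1)[OF fs_linear_tdag] tdag_pre tdag_corr involution_one[OF assms]
      involution_mult[OF assms])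

lemma tdag_pmul:
  assumes inv: "involution s d" and F: "F \<in> FS" and G: "G \<in> FS"
  shows "tdag d (pmul q F G) = (pmul q (tdag d G) (tdag d F) :: _ \<Rightarrow> 'k::field)"
proof -
  have "tdag d (shbar q u v) = (shbar q (map d v) (map d u) :: _ \<Rightarrow> 'k)" for u v
    by (cases "(q, u, v)" rule: shbar.cases)
      (simp_all add: tdag_pre tdag_sh[OF inv] involution_mult[OF inv] sh_commute mult.commute
        fs_linear_0[OF fs_linear_tdag])
  then show ?thesis
    by (intro fs_bilinear_eqI[OF fs_linear_comp_bilinear[OF fs_linear_tdag fs_bilinear_pmul]
          fs_bilinear_swap[OF fs_bilinear_comp[OF fs_linear_tdag fs_linear_tdag fs_bilinear_pmul]] F G])
      (simp add: tdag_wsingle)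
qed

lemma tdag_tdag:
  assumes "involution s d" and "F \<in> FS"
  shows "tdag d (tdag d F) = (F :: _ \<Rightarrow> 'k::field)"
proof -
  have "map d (map d u) = u" for u
    using assms(1) by (induct u) (simp_all add: involution_def)
  then show ?thesis
    by (intro fs_linear_eqI[OF fs_linear_comp[OF fs_linear_tdag fs_linear_tdag] fs_linear_id assms(2)])
      (simp add: tdag_wsingle)
qed

lemma PA_tdag: "involution s d \<Longrightarrow> F \<in> FS \<Longrightarrow> PA (tdag d F) = (tdag d (PA F) :: _ \<Rightarrow> 'k::field)"
  by (simp add: PA_def tdag_pre involution_one)


lemma tplus_inv_comm_rq_holds:
  fixes sA :: "'k::field \<Rightarrow> 'a::comm_ring_1 \<Rightarrow> 'a"
  assumes kalg: "kalg sA" and inv: "involution sA d"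
  shows "tplus_inv_comm_rq sA d q"
  unfolding tplus_inv_comm_rq_def PA_corr_def[symmetric]
  using NR_TP TP_punit TP_add TP_pmul TP_fsc TP_PA TP_tdag NR_pmul[OF kalg]
    pmul_commute[OF _ NR_FS] NR_PA NR_tdag[OF inv]
  by (auto simp: PA_def[symmetric] TP_FS teq_def NR.zero pmul_assoc pmul_commute[of _ _ q]
      pmul_punit_left pmul_add_right pmul_fsc_left PA_rq_identity tdag_tdag[OF inv] tdag_pmul[OF inv]
      PA_tdag[OF inv] fs_linearD[OF fs_linear_PA] fs_linearD[OF fs_linear_tdag])


section \<open>The universal property\<close>

primrec nest :: "('a \<Rightarrow> 'x::comm_ring_1) \<Rightarrow> ('x \<Rightarrow> 'x) \<Rightarrow> 'a list \<Rightarrow> 'x" where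
  "nest \<phi> P [] = 1"
| "nest \<phi> P (a # U) = P (\<phi> a * nest \<phi> P U)"

text \<open>The empty word does not belong to T^+(A); it is sent to 0.\<close>
definition word_lift :: "('a \<Rightarrow> 'x::comm_ring_1) \<Rightarrow> ('x \<Rightarrow> 'x) \<Rightarrow> 'a list \<Rightarrow> 'x" where
  "word_lift \<phi> P u = (case u of [] \<Rightarrow> 0 | a # U \<Rightarrow> \<phi> a * nest \<phi> P U)"

lemma word_lift_Nil [simp]: "word_lift \<phi> P [] = 0"
  and word_lift_Cons [simp]: "word_lift \<phi> P (a # U) = \<phi> a * nest \<phi> P U"
  by (simp_all add: word_lift_def)

locale rq_extension =
  fixes sA :: "'k::field \<Rightarrow> 'a::comm_ring_1 \<Rightarrow> 'a" and sX :: "'k \<Rightarrow> 'x::comm_ring_1 \<Rightarrow> 'x"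
    and PX :: "'x \<Rightarrow> 'x" and \<phi> :: "'a \<Rightarrow> 'x" and q :: "'k rq"
  assumes X: "comm_rq_algebra sX PX q" and hom: "alg_hom sA sX \<phi>"
begin

sublocale X: module sX
  using X by (simp add: comm_rq_algebra_def module_kalg)

sublocale P: additive PX
  using X by unfold_locales (simp add: comm_rq_algebra_def klinear_def)

lemma PX_scale: "PX (sX c x) = sX c (PX x)"
  using X by (simp add: comm_rq_algebra_def klinear_def)
lemma scale_mult_left: "sX c x * y = sX c (x * y)"
  using X by (simp add: comm_rq_algebra_def kalg_def)
lemma scale_mult_right: "x * sX c y = sX c (x * y)"
  using scale_mult_left[of c y x] by (simp add: mult.commute)
lemma phi_add: "\<phi> (x + y) = \<phi> x + \<phi> y"
  using hom by (simp add: alg_hom_def klinear_def)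
lemma phi_scale: "\<phi> (sA c x) = sX c (\<phi> x)"
  using hom by (simp add: alg_hom_def klinear_def)
lemma phi_one: "\<phi> 1 = 1"
  using hom by (simp add: alg_hom_def)
lemma phi_mult: "\<phi> (x * y) = \<phi> x * \<phi> y"
  using hom by (simp add: alg_hom_def)

definition Xcorr :: "'x \<Rightarrow> 'x \<Rightarrow> 'x" where
  "Xcorr x y = (case q of RTheta \<theta> \<Rightarrow> sX \<theta> (PX (x * y)) | RNij \<Rightarrow> - PX (PX (x * y))
     | RTD \<Rightarrow> - PX (x * PX 1 * y))"

lemma rq_identity: "PX x * PX y = PX (PX x * y + x * PX y) + Xcorr x y"
  using X by (simp add: comm_rq_algebra_def rq_op_def Xcorr_def)

lemma Xcorr_in_range: "Xcorr x y \<in> range PX"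
  unfolding Xcorr_def by (cases q) (auto simp flip: PX_scale P.minus)

lemma PX_mult_in_range: "PX x * PX y \<in> range PX"
  using Xcorr_in_range[of x y] by (auto simp: rq_identity simp flip: P.add)

lemma TD_PX_PX: "q = RTD \<Longrightarrow> PX (PX z) = PX z * PX 1"
  using rq_identity[of z 1] unfolding Xcorr_def by (simp add: P.add)

abbreviation "NEST \<equiv> nest \<phi> PX"
abbreviation "WL \<equiv> word_lift \<phi> PX"

lemma TD_PX_nest_mult: "q = RTD \<Longrightarrow> PX (NEST U * NEST V) = PX 1 * (NEST U * NEST V)"
proof -
  assume TD: "q = RTD"
  have nest: "NEST W = 1 \<or> NEST W \<in> range PX" for W by (cases W) auto
  have "NEST U * NEST V = 1 \<or> NEST U * NEST V \<in> range PX"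
    using nest[of U] nest[of V] PX_mult_in_range by auto
  then show ?thesis using TD_PX_PX[OF TD] by (auto simp: mult.commute)
qed

definition nest_lin :: "('a list \<Rightarrow> 'k) \<Rightarrow> 'x" where
  "nest_lin F = lincomb sX NEST F"

definition lift :: "('a list \<Rightarrow> 'k) \<Rightarrow> 'x" where
  "lift F = lincomb sX WL F"

lemma lincomb_X_map:
  assumes "\<And>x y. L (x + y) = L x + L y" "\<And>c x. L (sX c x) = sX c (L x)"
  shows "L (lincomb sX g F) = lincomb sX (\<lambda>u. L (g u)) F"
  by (rule lincomb_map[where D=UNIV]) (simp_all add: assms)

lemma lincomb_X_lin:
  assumes "\<And>u. f u \<in> FS"
  shows "lincomb sX g (lin f F) = lincomb sX (\<lambda>u. lincomb sX g (f u)) F"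
  by (rule lincomb_map[where D=FS]) (simp_all add: assms X.lincomb_add X.lincomb_fsc)

lemma nest_lin_pre: "F \<in> FS \<Longrightarrow> nest_lin (pre a F) = PX (\<phi> a * nest_lin F)"
  unfolding nest_lin_def
  by (simp add: pre_eq_lin lincomb_X_lin lincomb_X_map[of "\<lambda>x. PX (\<phi> a * x)"]
      distrib_left scale_mult_right PX_scale P.add)

lemma lift_pre: "F \<in> FS \<Longrightarrow> lift (pre a F) = \<phi> a * nest_lin F"
  unfolding lift_def nest_lin_def
  by (simp add: pre_eq_lin lincomb_X_lin lincomb_X_map[of "\<lambda>x. \<phi> a * x"]
      distrib_left scale_mult_right)

lemma nest_lin_add: "F \<in> FS \<Longrightarrow> G \<in> FS \<Longrightarrow> nest_lin (F + G) = nest_lin F + nest_lin G"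
  and nest_lin_fsc: "F \<in> FS \<Longrightarrow> nest_lin (fsc c F) = sX c (nest_lin F)"
  and nest_lin_neg: "F \<in> FS \<Longrightarrow> nest_lin (- F) = - nest_lin F"
  and nest_lin_wsingle: "nest_lin (wsingle u) = NEST u"
  by (simp_all add: nest_lin_def X.lincomb_add X.lincomb_fsc X.lincomb_neg)

lemma lift_add: "F \<in> FS \<Longrightarrow> G \<in> FS \<Longrightarrow> lift (F + G) = lift F + lift G"
  and lift_fsc: "F \<in> FS \<Longrightarrow> lift (fsc c F) = sX c (lift F)"
  and lift_diff: "F \<in> FS \<Longrightarrow> G \<in> FS \<Longrightarrow> lift (F - G) = lift F - lift G"
  and lift_wsingle: "lift (wsingle u) = WL u"
  and lift_zero: "lift 0 = 0"
  by (simp_all add: lift_def X.lincomb_add X.lincomb_fsc X.lincomb_diff)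

lemma nest_lin_corr:
  assumes "Y \<in> FS" and Y: "nest_lin Y = NEST U * NEST V"
  shows "nest_lin (corr q (a * b) Y) = Xcorr (\<phi> a * NEST U) (\<phi> b * NEST V)"
proof -
  have "q = RTD \<Longrightarrow> PX (\<phi> a * \<phi> b * PX (NEST U * NEST V))
      = PX (\<phi> a * \<phi> b * (PX 1 * (NEST U * NEST V)))"
    by (simp add: TD_PX_nest_mult)
  then show ?thesis
    using \<open>Y \<in> FS\<close> unfolding corr_def Xcorr_def
    by (cases q) (simp_all add: nest_lin_fsc nest_lin_neg nest_lin_pre Y phi_mult phi_one ac_simps)
qed

lemma nest_lin_sh: "nest_lin (sh q U V) = NEST U * NEST V"
proof (induct U V rule: shuffle_induct)
  case (Cons_Cons a U b V)
  let ?x = "\<phi> a * NEST U" and ?y = "\<phi> b * NEST V"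
  have "nest_lin (sh q (a # U) (b # V))
      = PX (?x * PX ?y) + PX (?y * PX ?x) + nest_lin (corr q (a * b) (sh q U V))"
    using Cons_Cons by (simp add: sh_Cons_Cons nest_lin_add nest_lin_pre ac_simps)
  also have "\<dots> = PX ?x * PX ?y"
    using Cons_Cons by (simp add: nest_lin_corr rq_identity P.add ac_simps)
  finally show ?case by simp
qed (simp_all add: nest_lin_wsingle)

lemma lift_shbar: "lift (shbar q u v) = WL u * WL v"
  by (cases "(q, u, v)" rule: shbar.cases) (simp_all add: lift_pre nest_lin_sh phi_mult lift_zero ac_simps)

lemma lift_pmul: "lift (pmul q F G) = lift F * lift G"
proof -
  have "lift (pmul q F G) = lincomb sX (\<lambda>u. lincomb sX (\<lambda>v. lift (shbar q u v)) G) F"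
    unfolding pmul_eq_bilincomb bilincomb_def lift_def by (simp add: lincomb_X_lin FS_lin)
  also have "\<dots> = lincomb sX (\<lambda>u. WL u * lift G) F"
  proof (rule X.lincomb_cong)
    show "lincomb sX (\<lambda>v. lift (shbar q u v)) G = WL u * lift G" for u
      unfolding lift_shbar lift_def[of G]
      by (rule lincomb_X_map[symmetric]) (simp_all add: distrib_left scale_mult_right)
  qed
  also have "\<dots> = lift F * lift G"
    unfolding lift_def[of F]
    by (rule lincomb_X_map[symmetric]) (simp_all add: distrib_right scale_mult_left)
  finally show ?thesis .
qed

lemma nest_scale: "NEST (u @ sA c a # w) = sX c (NEST (u @ a # w))"
  by (induct u) (simp_all add: phi_scale scale_mult_left scale_mult_right PX_scale)

lemma nest_add: "NEST (u @ (a + b) # w) = NEST (u @ a # w) + NEST (u @ b # w)"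
  by (induct u) (simp_all add: phi_add distrib_left distrib_right P.add)

lemma lift_NR: "N \<in> NR sA \<Longrightarrow> lift N = 0"
proof (induct rule: NR.induct)
  case (rel_scale u c a w)
  then show ?case
    by (cases u) (simp_all add: lift_diff lift_fsc lift_wsingle phi_scale scale_mult_left
        scale_mult_right nest_scale)
next
  case (rel_add u a b w)
  then show ?case
    by (cases u) (simp_all add: lift_diff lift_wsingle phi_add distrib_left distrib_right nest_add)
qed (simp_all add: lift_def lift_add[unfolded lift_def] lift_fsc[unfolded lift_def] NR_FS)

lemma nest_eq_PX_word_lift: "u \<noteq> [] \<Longrightarrow> NEST u = PX (WL u)"
  by (cases u) auto

lemma lift_PA: "F \<in> TP \<Longrightarrow> lift (PA F) = PX (lift F)"
proof -
  assume F: "F \<in> TP"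
  have "lift (PA F) = nest_lin F" using F by (simp add: PA_def lift_pre phi_one TP_FS)
  also have "\<dots> = lincomb sX (\<lambda>u. PX (WL u)) F"
    unfolding nest_lin_def
    by (rule X.lincomb_cong) (simp add: TP_supp_not_Nil[OF F] nest_eq_PX_word_lift)
  also have "\<dots> = PX (lift F)"
    unfolding lift_def by (rule lincomb_X_map[symmetric]) (simp_all add: P.add PX_scale)
  finally show ?thesis .
qed

lemma lift_iA: "lift (iA a) = \<phi> a"
  by (simp add: iA_def lift_wsingle)

lemma lift_is_rq_mor: "tplus_rq_mor sA q sX PX lift"
  unfolding tplus_rq_mor_def
  by (simp add: lift_NR lift_add lift_fsc TP_FS lift_pmul lift_PA lift_wsingle punit_def phi_one)

lemma lift_tdag:
  assumes invX: "involution sX dX" and PX_dX: "\<And>x. PX (dX x) = dX (PX x)"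
    and phi_d: "\<And>a. \<phi> (d a) = dX (\<phi> a)"
  shows "lift (tdag d F) = dX (lift F)"
proof -
  have dX: "dX (x + y) = dX x + dX y" "dX (sX c x) = sX c (dX x)" for x y c
    using invX by (auto simp: involution_def klinear_def)
  have nest_d: "NEST (map d u) = dX (NEST u)" for u
    by (induct u) (simp_all add: involution_one[OF invX] involution_mult[OF invX, symmetric] phi_d PX_dX)
  have "lift (tdag d F) = lincomb sX (\<lambda>u. WL (map d u)) F"
    unfolding tdag_eq_lin lift_def by (simp add: lincomb_X_lin)
  also have "\<dots> = lincomb sX (\<lambda>u. dX (WL u)) F"
  proof (rule X.lincomb_cong)
    have "dX 0 = 0" using dX(1)[of 0 0] by simp
    then show "WL (map d u) = dX (WL u)" for u
      by (cases u) (simp_all add: nest_d phi_d involution_mult[OF invX])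
  qed
  also have "\<dots> = dX (lift F)"
    unfolding lift_def by (rule lincomb_X_map[symmetric]) (simp_all add: dX)
  finally show ?thesis .
qed

lemma lift_unique:
  assumes mor: "tplus_rq_mor sA q sX PX \<Psi>" and \<Psi>_iA: "\<And>a. \<Psi> (iA a) = \<phi> a" and F: "F \<in> TP"
  shows "\<Psi> F = lift F"
proof -
  have add: "\<And>F G. F \<in> TP \<Longrightarrow> G \<in> TP \<Longrightarrow> \<Psi> (F + G) = \<Psi> F + \<Psi> G"
    and scale: "\<And>c F. F \<in> TP \<Longrightarrow> \<Psi> (fsc c F) = sX c (\<Psi> F)"
    and mult: "\<And>F G. F \<in> TP \<Longrightarrow> G \<in> TP \<Longrightarrow> \<Psi> (pmul q F G) = \<Psi> F * \<Psi> G"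
    and PA: "\<And>F. F \<in> TP \<Longrightarrow> \<Psi> (PA F) = PX (\<Psi> F)"
    using mor unfolding tplus_rq_mor_def by blast+
  have word: "\<Psi> (wsingle (a # U)) = WL (a # U)" for a U
  proof (induct U arbitrary: a)
    case Nil
    then show ?case using \<Psi>_iA[of a] by (simp add: iA_def)
  next
    case (Cons b U)
    have "wsingle (a # b # U) = pmul q (iA a) (PA (wsingle (b # U)))"
      by (simp add: iA_def PA_wsingle pre_wsingle)
    then show ?case
      using Cons \<Psi>_iA by (simp add: mult PA iA_def TP_wsingle TP_PA)
  qed
  have "\<Psi> F = \<Psi> (lin wsingle F)" using F by (simp add: lin_wsingle_self TP_FS)
  also have "\<dots> = lincomb sX (\<lambda>u. \<Psi> (wsingle u)) F"
    by (rule lincomb_map[where D=TP])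
      (simp_all add: add scale TP_add TP_fsc TP_0 TP_wsingle TP_supp_not_Nil[OF F])
  also have "\<dots> = lift F"
    unfolding lift_def
    by (rule X.lincomb_cong) (metis TP_supp_not_Nil[OF F] neq_Nil_conv word)
  finally show ?thesis .
qed

end


theorem theorem4p9:
  fixes sA :: "'k::field_char_0 \<Rightarrow> 'a::comm_ring_1 \<Rightarrow> 'a"
    and d :: "'a \<Rightarrow> 'a"
    and q :: "'k rq"
  assumes "kalg sA"
    and "involution sA d"
  shows "tplus_inv_comm_rq sA d q
    \<and> (\<forall>(sX :: 'k \<Rightarrow> 'x::comm_ring_1 \<Rightarrow> 'x) PX dX \<phi>.
          inv_comm_rq_algebra sX PX q dX \<and> alg_hom sA sX \<phi> \<and> (\<forall>a. \<phi> (d a) = dX (\<phi> a)) \<longrightarrow>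
          (\<exists>\<Phi>. tplus_rq_mor sA q sX PX \<Phi> \<and> (\<forall>a. \<Phi> (iA a) = \<phi> a)
               \<and> (\<forall>F\<in>TP. \<Phi> (tdag d F) = dX (\<Phi> F))
               \<and> (\<forall>\<Psi>. tplus_rq_mor sA q sX PX \<Psi> \<and> (\<forall>a. \<Psi> (iA a) = \<phi> a) \<longrightarrow>
                      (\<forall>F\<in>TP. \<Psi> F = \<Phi> F))))"
proof (intro conjI allI impI)
  show "tplus_inv_comm_rq sA d q" by (rule tplus_inv_comm_rq_holds[OF assms])
  fix sX :: "'k \<Rightarrow> 'x \<Rightarrow> 'x" and PX dX \<phi>
  assume "inv_comm_rq_algebra sX PX q dX \<and> alg_hom sA sX \<phi> \<and> (\<forall>a. \<phi> (d a) = dX (\<phi> a))"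
  then have X: "comm_rq_algebra sX PX q" and hom: "alg_hom sA sX \<phi>" and invX: "involution sX dX"
    and PX_dX: "\<And>x. PX (dX x) = dX (PX x)" and phi_d: "\<And>a. \<phi> (d a) = dX (\<phi> a)"
    by (auto simp: inv_comm_rq_algebra_def)
  interpret rq_extension sA sX PX \<phi> q by (rule rq_extension.intro[OF X hom])
  show "\<exists>\<Phi>. tplus_rq_mor sA q sX PX \<Phi> \<and> (\<forall>a. \<Phi> (iA a) = \<phi> a)
      \<and> (\<forall>F\<in>TP. \<Phi> (tdag d F) = dX (\<Phi> F))
      \<and> (\<forall>\<Psi>. tplus_rq_mor sA q sX PX \<Psi> \<and> (\<forall>a. \<Psi> (iA a) = \<phi> a) \<longrightarrow> (\<forall>F\<in>TP. \<Psi> F = \<Phi> F))"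
    using lift_is_rq_mor lift_iA lift_tdag[OF invX PX_dX phi_d] lift_unique by blast
qed

end
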